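(* Let $\mathbf{H}\in\mathbb{H}^4$. The following are equivalent: (1) $\mathbf{Cov}_2(\mathbf{H})$ is transversely isotropic; (2) $\mathbf{H}$ is tetragonal, trigonal or transversely isotropic; (3) the pair $(\mathbf{d}_2,\mathbf{c}_3)$ is transversely isotropic.
   Context: $\mathbb{H}^4$ is the space of totally symmetric traceless fourth-order tensors on $\mathbb{R}^3$, with $SO(3)$-action $(g\star\mathbf{T})(x_1,\dots,x_n)=\mathbf{T}(g^{-1}x_1,\dots,g^{-1}x_n)$. $\mathbf{Cov}_2(\mathbf{H})\subset\mathrm{Sym}^2(\mathbb{R}^3)$ is the set of values at $\mathbf{H}$ of all $SO(3)$-equivariant polynomial maps $\mathbb{H}^4\to\mathrm{Sym}^2(\mathbb{R}^3)$. $(\mathbf{H}:\mathbf{H})_{ijkl}=H_{ijmn}H_{mnkl}$, $(\mathbf{H}:\mathbf{a})_{ij}=H_{ijkl}a_{kl}$, $(\operatorname{tr}_{13}\mathbf{A})_{ij}=A_{kikj}$, $\mathbf{d}_2=\operatorname{tr}_{13}(\mathbf{H}:\mathbf{H})$, $\mathbf{c}_3=\mathbf{H}:\mathbf{d}_2$. Symmetry group of a tensor: $\{g\in SO(3):g\star\mathbf{T}=\mathbf{T}\}$; of a family or subspace: intersection of members' groups; symmetry class: its conjugacy class. Transversely isotropic $=[O(2)]$, tetragonal $=[\mathbb{D}_4]$, trigonal $=[\mathbb{D}_3]$, where $O(2)$ is generated by rotations about the $z$-axis and the rotation by $\pi$ about the $x$-axis, and $\mathbb{D}_n$ is generated by the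 rotation by $2\pi/n$ about the $z$-axis and the rotation by $\pi$ about the $x$-axis. *)

theory Defs
  imports "HOL-Analysis.Analysis"
begin

text \<open>Tensors on R^3, given by their components in the standard basis.
  Index type 3 (numeral type); the coordinate axes x, y, z correspond to indices 1, 2, 3.\<close>

type_synonym tensor2 = "3 \<Rightarrow> 3 \<Rightarrow> real"
type_synonym tensor4 = "3 \<Rightarrow> 3 \<Rightarrow> 3 \<Rightarrow> 3 \<Rightarrow> real"
type_synonym mat3 = "real^3^3"

definition SO3 :: "mat3 set" where
  "SO3 = {g. orthogonal_matrix g \<and> det g = 1}"

definition totally_symmetric4 :: "tensor4 \<Rightarrow> bool" where
  "totally_symmetric4 T \<longleftrightarrow>
     (\<forall>i j k l. T i j k l = T j i k l \<and> T i j k l = T i k j l \<and> T i j k l = T i j l k)"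

definition H4 :: "tensor4 set" where
  "H4 = {T. totally_symmetric4 T \<and> (\<forall>k l. (\<Sum>i\<in>UNIV. T i i k l) = 0)}"

definition Sym2 :: "tensor2 set" where
  "Sym2 = {a. \<forall>i j. a i j = a j i}"

text \<open>The SO(3) action (g * T)(x1,..,xn) = T(g^-1 x1, .., g^-1 xn), in components.\<close>
definition act2 :: "mat3 \<Rightarrow> tensor2 \<Rightarrow> tensor2" where
  "act2 g a = (\<lambda>i j. \<Sum>p\<in>UNIV. \<Sum>q\<in>UNIV. g$i$p * g$j$q * a p q)"

definition act4 :: "mat3 \<Rightarrow> tensor4 \<Rightarrow> tensor4" where
  "act4 g T = (\<lambda>i j k l. \<Sum>p\<in>UNIV. \<Sum>q\<in>UNIV. \<Sum>r\<in>UNIV. \<Sum>s\<in>UNIV.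
      g$i$p * g$j$q * g$k$r * g$l$s * T p q r s)"

inductive_set polyfun4 :: "(tensor4 \<Rightarrow> real) set" where
  const: "(\<lambda>T. c) \<in> polyfun4"
| coord: "(\<lambda>T. T i j k l) \<in> polyfun4"
| add: "f \<in> polyfun4 \<Longrightarrow> h \<in> polyfun4 \<Longrightarrow> (\<lambda>T. f T + h T) \<in> polyfun4"
| mult: "f \<in> polyfun4 \<Longrightarrow> h \<in> polyfun4 \<Longrightarrow> (\<lambda>T. f T * h T) \<in> polyfun4"

text \<open>SO(3)-equivariant polynomial maps H^4 \<rightarrow> Sym^2(R^3) (only their values on H^4 matter).\<close>
definition equivariant_poly_map :: "(tensor4 \<Rightarrow> tensor2) \<Rightarrow> bool" where
  "equivariant_poly_map F \<longleftrightarrow>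
     (\<forall>i j. \<exists>p\<in>polyfun4. \<forall>T\<in>H4. F T i j = p T) \<and>
     (\<forall>T\<in>H4. F T \<in> Sym2) \<and>
     (\<forall>g\<in>SO3. \<forall>T\<in>H4. F (act4 g T) = act2 g (F T))"

definition Cov2 :: "tensor4 \<Rightarrow> tensor2 set" where
  "Cov2 H = {F H | F. equivariant_poly_map F}"

definition symgroup2 :: "tensor2 \<Rightarrow> mat3 set" where
  "symgroup2 a = {g\<in>SO3. act2 g a = a}"

definition symgroup4 :: "tensor4 \<Rightarrow> mat3 set" where
  "symgroup4 T = {g\<in>SO3. act4 g T = T}"

definition symgroup2_family :: "tensor2 set \<Rightarrow> mat3 set" where
  "symgroup2_family A = {g\<in>SO3. \<forall>a\<in>A. act2 g a = a}"

inductive_set gen_group :: "mat3 set \<Rightarrow> mat3 set" for S where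
  one: "mat 1 \<in> gen_group S"
| gen: "s \<in> S \<Longrightarrow> s \<in> gen_group S"
| mult: "a \<in> gen_group S \<Longrightarrow> b \<in> gen_group S \<Longrightarrow> a ** b \<in> gen_group S"
| inv: "a \<in> gen_group S \<Longrightarrow> matrix_inv a \<in> gen_group S"

definition rotz :: "real \<Rightarrow> mat3" where
  "rotz t = vector [vector [cos t, - sin t, 0], vector [sin t, cos t, 0], vector [0, 0, 1]]"

definition rotx :: "real \<Rightarrow> mat3" where
  "rotx t = vector [vector [1, 0, 0], vector [0, cos t, - sin t], vector [0, sin t, cos t]]"

definition O2 :: "mat3 set" where
  "O2 = gen_group (range rotz \<union> {rotx pi})"

definition Dn :: "nat \<Rightarrow> mat3 set" where
  "Dn n = gen_group {rotz (2 * pi / real n), rotx pi}"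

definition in_class :: "mat3 set \<Rightarrow> mat3 set \<Rightarrow> bool" where
  "in_class G K \<longleftrightarrow> (\<exists>g\<in>SO3. G = (\<lambda>k. g ** k ** matrix_inv g) ` K)"

definition dcontr44 :: "tensor4 \<Rightarrow> tensor4 \<Rightarrow> tensor4" where
  "dcontr44 A B = (\<lambda>i j k l. \<Sum>m\<in>UNIV. \<Sum>n\<in>UNIV. A i j m n * B m n k l)"

definition dcontr42 :: "tensor4 \<Rightarrow> tensor2 \<Rightarrow> tensor2" where
  "dcontr42 A a = (\<lambda>i j. \<Sum>k\<in>UNIV. \<Sum>l\<in>UNIV. A i j k l * a k l)"

definition tr13 :: "tensor4 \<Rightarrow> tensor2" where
  "tr13 A = (\<lambda>i j. \<Sum>k\<in>UNIV. A k i k j)"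

definition d2 :: "tensor4 \<Rightarrow> tensor2" where
  "d2 H = tr13 (dcontr44 H H)"

definition c3 :: "tensor4 \<Rightarrow> tensor2" where
  "c3 H = dcontr42 H (d2 H)"

end

theory Submission
  imports Defs
begin

(* All three properties are invariant under rotating H, so each can be checked in a frame where
   the group in question is O(2), D4 or D3 in standard position.  A symmetric second-order tensor
   fixed by a rotation of order 3 or 4 about the z-axis is transversely isotropic about z, and
   unless it is isotropic its symmetry group is exactly O(2).  If some covariant K is not isotropic, then H:K is a multiple
   of H:(e3 x e3), which puts H into a five-parameter normal form; a rotation by t about z rotates
   one pair of these parameters by 4t and another by 3t.  Since d2 has no off-axis entries, one of
   the two pairs vanishes, and rotating the other one into standard position shows that H is
   tetragonal, trigonal or transversely isotropic.  Conversely, for such H an isotropic d2 would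
   make H cubic, with symmetries outside O(2); so d2 is not isotropic, and the symmetry group of
   every family of covariants containing d2 is exactly O(2). *)

section \<open>Orthogonal matrices and the actions on tensors\<close>

lemma transpose_nth [simp]: "transpose A $ i $ j = A $ j $ i"
  by (simp add: transpose_def)

lemma orthogonal_matrix_columns:
  fixes g :: mat3
  assumes "orthogonal_matrix g"
  shows "(\<Sum>i\<in>UNIV. g$i$p * g$i$q) = (if p = q then 1 else 0)"
proof -
  have "(transpose g ** g)$p$q = (mat 1::mat3)$p$q"
    using assms by (simp add: orthogonal_matrix_def)
  then show ?thesis by (simp add: matrix_matrix_mult_def transpose_def mat_def)
qed

lemma orthogonal_matrix_rows:
  fixes g :: mat3
  assumes "orthogonal_matrix g"
  shows "(\<Sum>i\<in>UNIV. g$p$i * g$q$i) = (if p = q then 1 else 0)"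
proof -
  have "(\<Sum>i\<in>UNIV. transpose g$i$p * transpose g$i$q) = (if p = q then 1 else 0)"
    using assms by (intro orthogonal_matrix_columns) simp
  then show ?thesis by simp
qed

lemma orthogonal_inner:
  fixes g :: mat3
  assumes "orthogonal_matrix g"
  shows "(\<Sum>k\<in>UNIV. (\<Sum>p\<in>UNIV. g$k$p * x p) * (\<Sum>r\<in>UNIV. g$k$r * y r)) = (\<Sum>p\<in>UNIV. x p * y p)"
proof -
  have "(\<Sum>k\<in>UNIV. (\<Sum>p\<in>UNIV. g$k$p * x p) * (\<Sum>r\<in>UNIV. g$k$r * y r))
      = (\<Sum>p\<in>UNIV. \<Sum>r\<in>UNIV. (\<Sum>k\<in>UNIV. g$k$p * g$k$r) * (x p * y r))"
    by (simp add: sum_3 algebra_simps)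
  then show ?thesis
    by (simp add: orthogonal_matrix_columns[OF assms] sum_3)
qed

lemma orthogonal_trace:
  fixes g :: mat3
  assumes "orthogonal_matrix g"
  shows "(\<Sum>k\<in>UNIV. \<Sum>p\<in>UNIV. g$k$p * (\<Sum>r\<in>UNIV. g$k$r * Y p r)) = (\<Sum>p\<in>UNIV. Y p p)"
proof -
  have "(\<Sum>k\<in>UNIV. \<Sum>p\<in>UNIV. g$k$p * (\<Sum>r\<in>UNIV. g$k$r * Y p r))
      = (\<Sum>p\<in>UNIV. \<Sum>r\<in>UNIV. (\<Sum>k\<in>UNIV. g$k$p * g$k$r) * Y p r)"
    by (simp add: sum_3 algebra_simps)
  then show ?thesis
    by (simp add: orthogonal_matrix_columns[OF assms] sum_3)
qed

lemma SO3_orthogonal: "g \<in> SO3 \<Longrightarrow> orthogonal_matrix g"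
  by (simp add: SO3_def)

lemma SO3_matrix_inv: "g \<in> SO3 \<Longrightarrow> matrix_inv g = transpose g"
  unfolding SO3_def orthogonal_matrix_def matrix_inv_def
  by (rule some_equality) (auto, metis matrix_mul_assoc matrix_mul_lid matrix_mul_rid)

lemma SO3_mult: "g \<in> SO3 \<Longrightarrow> h \<in> SO3 \<Longrightarrow> g ** h \<in> SO3"
  by (simp add: SO3_def orthogonal_matrix_mul det_mul)

lemma SO3_transpose: "g \<in> SO3 \<Longrightarrow> transpose g \<in> SO3"
  by (simp add: SO3_def)

lemma SO3_mat_1: "mat 1 \<in> SO3"
  by (simp add: SO3_def orthogonal_matrix_id)

definition act_slot1 :: "mat3 \<Rightarrow> tensor4 \<Rightarrow> tensor4" where
  "act_slot1 g T = (\<lambda>i j k l. \<Sum>p\<in>UNIV. g$i$p * T p j k l)"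
definition act_slot2 :: "mat3 \<Rightarrow> tensor4 \<Rightarrow> tensor4" where
  "act_slot2 g T = (\<lambda>i j k l. \<Sum>p\<in>UNIV. g$j$p * T i p k l)"
definition act_slot3 :: "mat3 \<Rightarrow> tensor4 \<Rightarrow> tensor4" where
  "act_slot3 g T = (\<lambda>i j k l. \<Sum>p\<in>UNIV. g$k$p * T i j p l)"
definition act_slot4 :: "mat3 \<Rightarrow> tensor4 \<Rightarrow> tensor4" where
  "act_slot4 g T = (\<lambda>i j k l. \<Sum>p\<in>UNIV. g$l$p * T i j k p)"
definition act_row :: "mat3 \<Rightarrow> tensor2 \<Rightarrow> tensor2" where
  "act_row g a = (\<lambda>i j. \<Sum>p\<in>UNIV. g$i$p * a p j)"
definition act_col :: "mat3 \<Rightarrow> tensor2 \<Rightarrow> tensor2" where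
  "act_col g a = (\<lambda>i j. \<Sum>p\<in>UNIV. g$j$p * a i p)"

lemmas act_slot_defs =
  act_slot1_def act_slot2_def act_slot3_def act_slot4_def act_row_def act_col_def

lemma act4_eq_slots: "act4 g T = act_slot1 g (act_slot2 g (act_slot3 g (act_slot4 g T)))"
  by (simp add: act4_def act_slot_defs sum_distrib_left mult.assoc)

lemma act2_eq_row_col: "act2 g a = act_row g (act_col g a)"
  by (simp add: act2_def act_slot_defs sum_distrib_left mult.assoc)

lemma act_slots_commute:
  "act_slot1 g (act_slot2 h T) = act_slot2 h (act_slot1 g T)"
  "act_slot1 g (act_slot3 h T) = act_slot3 h (act_slot1 g T)"
  "act_slot1 g (act_slot4 h T) = act_slot4 h (act_slot1 g T)"
  "act_slot2 g (act_slot3 h T) = act_slot3 h (act_slot2 g T)"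
  "act_slot2 g (act_slot4 h T) = act_slot4 h (act_slot2 g T)"
  "act_slot3 g (act_slot4 h T) = act_slot4 h (act_slot3 g T)"
  "act_row g (act_col h a) = act_col h (act_row g a)"
  by (simp_all add: fun_eq_iff act_slot_defs sum_3 algebra_simps)

lemma act_slots_mult:
  "act_slot1 (g ** h) T = act_slot1 g (act_slot1 h T)"
  "act_slot2 (g ** h) T = act_slot2 g (act_slot2 h T)"
  "act_slot3 (g ** h) T = act_slot3 g (act_slot3 h T)"
  "act_slot4 (g ** h) T = act_slot4 g (act_slot4 h T)"
  "act_row (g ** h) a = act_row g (act_row h a)"
  "act_col (g ** h) a = act_col g (act_col h a)"
  by (simp_all add: fun_eq_iff act_slot_defs matrix_matrix_mult_def sum_3 algebra_simps)

lemma act4_mult: "act4 (g ** h) T = act4 g (act4 h T)"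
  by (simp add: act4_eq_slots act_slots_mult) (simp only: act_slots_commute)

lemma act2_mult: "act2 (g ** h) a = act2 g (act2 h a)"
  by (simp add: act2_eq_row_col act_slots_mult act_slots_commute)

lemma act4_mat_1: "act4 (mat 1) T = T"
  by (simp add: fun_eq_iff forall_3 act4_def mat_def sum_3)

lemma act2_mat_1: "act2 (mat 1) a = a"
  by (simp add: fun_eq_iff forall_3 act2_def mat_def sum_3)

lemma dcontr44_act_slots:
  "dcontr44 (act_slot1 g X) Y = act_slot1 g (dcontr44 X Y)"
  "dcontr44 (act_slot2 g X) Y = act_slot2 g (dcontr44 X Y)"
  "dcontr44 X (act_slot3 g Y) = act_slot3 g (dcontr44 X Y)"
  "dcontr44 X (act_slot4 g Y) = act_slot4 g (dcontr44 X Y)"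
  by (simp_all add: fun_eq_iff dcontr44_def act_slot_defs sum_3 algebra_simps)

lemma dcontr44_act_slots_cancel:
  assumes "orthogonal_matrix g"
  shows "dcontr44 (act_slot3 g X) (act_slot1 g Y) = dcontr44 X Y"
    and "dcontr44 (act_slot4 g X) (act_slot2 g Y) = dcontr44 X Y"
proof -
  have "dcontr44 (act_slot3 g X) (act_slot1 g Y) i j k l
      = (\<Sum>n\<in>UNIV. \<Sum>m\<in>UNIV. (\<Sum>p\<in>UNIV. g$m$p * X i j p n) * (\<Sum>r\<in>UNIV. g$m$r * Y r n k l))"
    for i j k l unfolding dcontr44_def act_slot_defs by (rule sum.swap)
  also have "\<dots> i j k l = (\<Sum>n\<in>UNIV. \<Sum>p\<in>UNIV. X i j p n * Y p n k l)" for i j k l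
    by (simp only: orthogonal_inner[OF assms])
  also have "\<dots> i j k l = dcontr44 X Y i j k l" for i j k l
    unfolding dcontr44_def by (rule sum.swap)
  finally show "dcontr44 (act_slot3 g X) (act_slot1 g Y) = dcontr44 X Y"
    by (simp add: fun_eq_iff)
  show "dcontr44 (act_slot4 g X) (act_slot2 g Y) = dcontr44 X Y"
    by (simp add: fun_eq_iff dcontr44_def act_slot_defs orthogonal_inner[OF assms])
qed

lemma dcontr44_act4:
  assumes "orthogonal_matrix g"
  shows "dcontr44 (act4 g A) (act4 g B) = act4 g (dcontr44 A B)"
proof -
  have B: "act4 g B = act_slot3 g (act_slot4 g (act_slot1 g (act_slot2 g B)))"
    by (simp only: act4_eq_slots act_slots_commute)
  have "dcontr44 (act4 g A) (act4 g B)
      = dcontr44 (act_slot1 g (act_slot2 g (act_slot3 g (act_slot4 g A))))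
          (act_slot3 g (act_slot4 g (act_slot1 g (act_slot2 g B))))"
    unfolding B by (simp only: act4_eq_slots)
  also have "\<dots> = act_slot3 g (act_slot4 g (act_slot1 g (act_slot2 g
          (dcontr44 (act_slot3 g (act_slot4 g A)) (act_slot1 g (act_slot2 g B))))))"
    by (simp only: dcontr44_act_slots)
  also have "\<dots> = act_slot3 g (act_slot4 g (act_slot1 g (act_slot2 g (dcontr44 A B))))"
    by (simp only: dcontr44_act_slots_cancel[OF assms])
  also have "\<dots> = act4 g (dcontr44 A B)"
    by (simp only: act4_eq_slots act_slots_commute)
  finally show ?thesis .
qed

lemma tr13_act4:
  assumes "orthogonal_matrix g"
  shows "tr13 (act4 g A) = act2 g (tr13 A)"
proof -
  have "act4 g A = act_slot2 g (act_slot4 g (act_slot1 g (act_slot3 g A)))"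
    by (simp only: act4_eq_slots act_slots_commute)
  moreover have "tr13 (act_slot2 g (act_slot4 g X)) = act_row g (act_col g (tr13 X))" for X
    by (simp add: fun_eq_iff tr13_def act_slot_defs sum_3 algebra_simps)
  moreover have "tr13 (act_slot1 g (act_slot3 g A)) = tr13 A"
    by (simp add: fun_eq_iff tr13_def act_slot_defs orthogonal_trace[OF assms])
  ultimately show ?thesis
    by (simp add: act2_eq_row_col)
qed

lemma dcontr42_act:
  assumes "orthogonal_matrix g"
  shows "dcontr42 (act4 g A) (act2 g a) = act2 g (dcontr42 A a)"
proof -
  have cancel: "dcontr42 (act_slot3 g (act_slot4 g A)) (act_row g (act_col g a)) = dcontr42 A a"
  proof (rule ext)+
    fix i j
    have "dcontr42 (act_slot3 g (act_slot4 g A)) (act_row g (act_col g a)) i j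
        = (\<Sum>l\<in>UNIV. \<Sum>k\<in>UNIV. (\<Sum>p\<in>UNIV. g$k$p * act_slot4 g A i j p l)
            * (\<Sum>r\<in>UNIV. g$k$r * act_col g a r l))"
      unfolding dcontr42_def act_slot3_def act_row_def by (rule sum.swap)
    also have "\<dots> = (\<Sum>l\<in>UNIV. \<Sum>k\<in>UNIV. act_slot4 g A i j k l * act_col g a k l)"
      by (simp only: orthogonal_inner[OF assms])
    also have "\<dots> = (\<Sum>k\<in>UNIV. \<Sum>l\<in>UNIV. act_slot4 g A i j k l * act_col g a k l)"
      by (rule sum.swap)
    also have "\<dots> = dcontr42 A a i j"
      by (simp add: dcontr42_def act_slot_defs orthogonal_inner[OF assms])
    finally show "dcontr42 (act_slot3 g (act_slot4 g A)) (act_row g (act_col g a)) i j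
        = dcontr42 A a i j" .
  qed
  have "dcontr42 (act_slot1 g (act_slot2 g X)) b = act_row g (act_col g (dcontr42 X b))" for X b
    by (simp add: fun_eq_iff dcontr42_def act_slot_defs sum_3 algebra_simps)
  then have "dcontr42 (act4 g A) (act2 g a)
      = act_row g (act_col g (dcontr42 (act_slot3 g (act_slot4 g A)) (act_row g (act_col g a))))"
    by (simp only: act4_eq_slots act2_eq_row_col)
  then show ?thesis
    by (simp only: cancel act2_eq_row_col)
qed

lemma d2_act4: "orthogonal_matrix g \<Longrightarrow> d2 (act4 g A) = act2 g (d2 A)"
  by (simp add: d2_def dcontr44_act4 tr13_act4)

lemma c3_act4: "orthogonal_matrix g \<Longrightarrow> c3 (act4 g A) = act2 g (c3 A)"
  by (simp add: c3_def d2_act4 dcontr42_act)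

lemma act4_swap12: "act4 g T j i k l = act4 g (\<lambda>i j k l. T j i k l) i j k l"
  unfolding act4_def by (subst sum.swap) (simp add: mult_ac)

lemma act4_swap23: "act4 g T i k j l = act4 g (\<lambda>i j k l. T i k j l) i j k l"
  unfolding act4_def by (rule sum.cong[OF refl], subst sum.swap) (simp add: mult_ac)

lemma act4_swap34: "act4 g T i j l k = act4 g (\<lambda>i j k l. T i j l k) i j k l"
  unfolding act4_def
  by (rule sum.cong[OF refl], rule sum.cong[OF refl], subst sum.swap) (simp add: mult_ac)

lemma totally_symmetric4_act4:
  assumes "totally_symmetric4 T"
  shows "totally_symmetric4 (act4 g T)"
proof -
  have sym: "(\<lambda>i j k l. T j i k l) = T" "(\<lambda>i j k l. T i k j l) = T" "(\<lambda>i j k l. T i j l k) = T"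
    using assms unfolding totally_symmetric4_def by (auto intro!: ext)
  have "act4 g T j i k l = act4 g T i j k l" "act4 g T i k j l = act4 g T i j k l"
    "act4 g T i j l k = act4 g T i j k l" for i j k l
    using act4_swap12[of g T j i k l] act4_swap23[of g T i k j l] act4_swap34[of g T i j l k]
    by (simp_all only: sym)
  then show ?thesis
    unfolding totally_symmetric4_def by simp
qed

lemma act4_H4:
  assumes g: "orthogonal_matrix g" and T: "T \<in> H4"
  shows "act4 g T \<in> H4"
proof -
  have "act4 g T = act_slot3 g (act_slot4 g (act_slot1 g (act_slot2 g T)))"
    by (simp only: act4_eq_slots act_slots_commute)
  moreover have "(\<Sum>i\<in>UNIV. act_slot3 g (act_slot4 g Z) i i k l)
      = (\<Sum>p\<in>UNIV. g$k$p * (\<Sum>q\<in>UNIV. g$l$q * (\<Sum>i\<in>UNIV. Z i i p q)))" for Z k l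
    by (simp add: act_slot_defs sum_3 algebra_simps)
  moreover have "(\<Sum>i\<in>UNIV. act_slot1 g (act_slot2 g T) i i k l) = (\<Sum>i\<in>UNIV. T i i k l)" for k l
    by (simp add: act_slot_defs orthogonal_trace[OF g])
  ultimately have "(\<Sum>i\<in>UNIV. act4 g T i i k l) = 0" for k l
    using T by (simp add: H4_def)
  then show ?thesis
    using T totally_symmetric4_act4 by (simp add: H4_def)
qed

section \<open>Symmetry groups and conjugation\<close>

definition matrix_group :: "mat3 set \<Rightarrow> bool" where
  "matrix_group G \<longleftrightarrow> mat 1 \<in> G \<and> (\<forall>a\<in>G. \<forall>b\<in>G. a ** b \<in> G) \<and> (\<forall>a\<in>G. matrix_inv a \<in> G)"

lemma matrix_group_gen_group: "matrix_group (gen_group S)"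
  by (auto simp: matrix_group_def intro: gen_group.intros)

lemma gen_group_least:
  assumes "matrix_group G" "S \<subseteq> G"
  shows "gen_group S \<subseteq> G"
proof
  fix x assume "x \<in> gen_group S"
  then show "x \<in> G"
    by induct (use assms in \<open>auto simp: matrix_group_def\<close>)
qed

lemma gen_group_mono: "S \<subseteq> T \<Longrightarrow> gen_group S \<subseteq> gen_group T"
  by (meson gen_group.gen gen_group_least matrix_group_gen_group subset_iff)

definition conjugate :: "mat3 \<Rightarrow> mat3 \<Rightarrow> mat3" where
  "conjugate g k = g ** k ** matrix_inv g"

lemma in_class_iff: "in_class G K \<longleftrightarrow> (\<exists>g\<in>SO3. G = conjugate g ` K)"
  unfolding in_class_def conjugate_def by (rule refl)

lemma conjugate_SO3: "g \<in> SO3 \<Longrightarrow> conjugate g k = g ** k ** transpose g"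
  by (simp add: conjugate_def SO3_matrix_inv)

lemma conjugate_mult:
  "g \<in> SO3 \<Longrightarrow> h \<in> SO3 \<Longrightarrow> conjugate g (conjugate h k) = conjugate (g ** h) k"
  by (simp add: conjugate_SO3 SO3_mult matrix_transpose_mul matrix_mul_assoc)

lemma conjugate_transpose_cancel: "g \<in> SO3 \<Longrightarrow> conjugate (transpose g) (conjugate g k) = k"
  using SO3_orthogonal[of g]
  by (simp add: conjugate_mult SO3_transpose orthogonal_matrix_def)
     (simp add: conjugate_SO3 SO3_mat_1)

lemma in_class_refl: "in_class G G"
  unfolding in_class_iff using SO3_mat_1 by (force simp: conjugate_SO3)

lemma in_class_conjugate_image:
  assumes "g \<in> SO3"
  shows "in_class (conjugate g ` G) K \<longleftrightarrow> in_class G K"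
proof
  assume "in_class (conjugate g ` G) K"
  then obtain h where h: "h \<in> SO3" "conjugate g ` G = conjugate h ` K"
    by (auto simp: in_class_iff)
  have "G = conjugate (transpose g) ` conjugate g ` G"
    using assms by (simp add: image_image conjugate_transpose_cancel)
  also have "\<dots> = conjugate (transpose g ** h) ` K"
    using h assms by (simp add: image_image conjugate_mult SO3_transpose)
  finally show "in_class G K"
    using h assms by (auto simp: in_class_iff SO3_mult SO3_transpose)
next
  assume "in_class G K"
  then obtain h where h: "h \<in> SO3" "G = conjugate h ` K"
    by (auto simp: in_class_iff)
  then have "conjugate g ` G = conjugate (g ** h) ` K"
    using assms by (simp add: image_image conjugate_mult)
  then show "in_class (conjugate g ` G) K"
    using h assms by (auto simp: in_class_iff SO3_mult)
qed

lemma in_class_iff_conjugate_image_eq: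
  "in_class G K \<longleftrightarrow> (\<exists>g\<in>SO3. conjugate g ` G = K)"
  unfolding in_class_iff
  by (metis (no_types, lifting) SO3_transpose conjugate_transpose_cancel image_cong image_ident
      image_image transpose_transpose)

locale rotation_action =
  fixes act :: "mat3 \<Rightarrow> 'a \<Rightarrow> 'a"
  assumes act_mult: "act (g ** h) x = act g (act h x)"
    and act_mat_1: "act (mat 1) x = x"
begin

definition stabilizer :: "'a set \<Rightarrow> mat3 set" where
  "stabilizer A = {g \<in> SO3. \<forall>a\<in>A. act g a = a}"

lemma act_transpose_cancel:
  assumes "g \<in> SO3"
  shows "act (transpose g) (act g x) = x" "act g (act (transpose g) x) = x"
  using SO3_orthogonal[OF assms]
  by (simp_all add: act_mult[symmetric] act_mat_1 orthogonal_matrix_def)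

lemma matrix_group_stabilizer: "matrix_group (stabilizer A)"
  unfolding matrix_group_def stabilizer_def
  by (auto simp: SO3_mat_1 SO3_mult SO3_matrix_inv SO3_transpose act_mat_1 act_mult)
     (metis act_transpose_cancel(1))

lemma stabilizer_image:
  assumes g: "g \<in> SO3"
  shows "stabilizer (act g ` A) = conjugate g ` stabilizer A"
proof
  show "conjugate g ` stabilizer A \<subseteq> stabilizer (act g ` A)"
  proof
    fix m assume "m \<in> conjugate g ` stabilizer A"
    then obtain k where k: "k \<in> SO3" "\<forall>a\<in>A. act k a = a" "m = g ** k ** transpose g"
      by (auto simp: stabilizer_def conjugate_SO3[OF g])
    then have "act m (act g a) = act g a" if "a \<in> A" for a
      using that by (simp add: act_mult act_transpose_cancel[OF g])
    then show "m \<in> stabilizer (act g ` A)"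
      using k g by (simp add: stabilizer_def SO3_mult SO3_transpose)
  qed
  show "stabilizer (act g ` A) \<subseteq> conjugate g ` stabilizer A"
  proof
    fix m assume m: "m \<in> stabilizer (act g ` A)"
    define k where "k = transpose g ** m ** g"
    have "act k a = a" if "a \<in> A" for a
      using m that by (simp add: k_def stabilizer_def act_mult act_transpose_cancel[OF g])
    then have "k \<in> stabilizer A"
      using m g by (simp add: k_def stabilizer_def SO3_mult SO3_transpose)
    moreover have "m = conjugate g k"
      using SO3_orthogonal[OF g]
      by (simp add: k_def conjugate_SO3[OF g] matrix_mul_assoc orthogonal_matrix_def)
         (simp add: matrix_mul_assoc[symmetric])
    ultimately show "m \<in> conjugate g ` stabilizer A" by blast
  qed
qed

end

interpretation tensor4: rotation_action act4
  by unfold_locales (simp_all add: act4_mult act4_mat_1)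

interpretation tensor2: rotation_action act2
  by unfold_locales (simp_all add: act2_mult act2_mat_1)

lemma symgroup4_eq_stabilizer: "symgroup4 T = tensor4.stabilizer {T}"
  by (simp add: symgroup4_def tensor4.stabilizer_def)

lemma symgroup2_eq_stabilizer: "symgroup2 a = tensor2.stabilizer {a}"
  by (simp add: symgroup2_def tensor2.stabilizer_def)

lemma symgroup2_family_eq_stabilizer: "symgroup2_family A = tensor2.stabilizer A"
  by (simp add: symgroup2_family_def tensor2.stabilizer_def)

lemma symgroup4_act4: "g \<in> SO3 \<Longrightarrow> symgroup4 (act4 g T) = conjugate g ` symgroup4 T"
  using tensor4.stabilizer_image[of g "{T}"] by (simp add: symgroup4_eq_stabilizer)

lemma symgroup2_family_image:
  "g \<in> SO3 \<Longrightarrow> symgroup2_family (act2 g ` A) = conjugate g ` symgroup2_family A"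
  by (simp add: symgroup2_family_eq_stabilizer tensor2.stabilizer_image)

lemma in_class_symgroup4_act4:
  "g \<in> SO3 \<Longrightarrow> in_class (symgroup4 (act4 g H)) K \<longleftrightarrow> in_class (symgroup4 H) K"
  by (simp add: symgroup4_act4 in_class_conjugate_image)

lemma in_class_iff_act4_eq:
  assumes "\<And>g. g \<in> SO3 \<Longrightarrow> Grp (act4 g H) = conjugate g ` Grp H"
  shows "in_class (Grp H) K \<longleftrightarrow> (\<exists>g\<in>SO3. Grp (act4 g H) = K)"
  using assms by (simp add: in_class_iff_conjugate_image_eq)

section \<open>Rotations about the z-axis and the groups O(2) and D_n\<close>

lemma mat3_eq_iff:
  "(A::mat3) = B \<longleftrightarrow>
    A$1$1 = B$1$1 \<and> A$1$2 = B$1$2 \<and> A$1$3 = B$1$3 \<and>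
    A$2$1 = B$2$1 \<and> A$2$2 = B$2$2 \<and> A$2$3 = B$2$3 \<and>
    A$3$1 = B$3$1 \<and> A$3$2 = B$3$2 \<and> A$3$3 = B$3$3"
  by (simp add: vec_eq_iff forall_3)

lemma mat3_mult_nth: "((A::mat3) ** B)$i$j = A$i$1 * B$1$j + A$i$2 * B$2$j + A$i$3 * B$3$j"
  by (simp add: matrix_matrix_mult_def sum_3)

lemma mat3_nth [simp]:
  "(mat c::mat3)$1$1 = c" "(mat c::mat3)$1$2 = 0" "(mat c::mat3)$1$3 = 0"
  "(mat c::mat3)$2$1 = 0" "(mat c::mat3)$2$2 = c" "(mat c::mat3)$2$3 = 0"
  "(mat c::mat3)$3$1 = 0" "(mat c::mat3)$3$2 = 0" "(mat c::mat3)$3$3 = c"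
  by (simp_all add: mat_def)

lemma rotz_nth [simp]:
  "rotz t$1$1 = cos t" "rotz t$1$2 = - sin t" "rotz t$1$3 = 0"
  "rotz t$2$1 = sin t" "rotz t$2$2 = cos t" "rotz t$2$3 = 0"
  "rotz t$3$1 = 0" "rotz t$3$2 = 0" "rotz t$3$3 = 1"
  by (simp_all add: rotz_def)

lemma rotx_nth [simp]:
  "rotx t$1$1 = 1" "rotx t$1$2 = 0" "rotx t$1$3 = 0"
  "rotx t$2$1 = 0" "rotx t$2$2 = cos t" "rotx t$2$3 = - sin t"
  "rotx t$3$1 = 0" "rotx t$3$2 = sin t" "rotx t$3$3 = cos t"
  by (simp_all add: rotx_def)

lemma rotz_add: "rotz a ** rotz b = rotz (a + b)"
  by (simp add: mat3_eq_iff mat3_mult_nth cos_add sin_add)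

lemma rotz_0: "rotz 0 = mat 1"
  by (simp add: mat3_eq_iff)

lemma transpose_rotz: "transpose (rotz t) = rotz (- t)"
  by (simp add: mat3_eq_iff)

lemma rotx_pi_rotx_pi: "rotx pi ** rotx pi = mat 1"
  by (simp add: mat3_eq_iff mat3_mult_nth)

lemma SO3_I: "transpose g ** g = mat 1 \<Longrightarrow> det g = 1 \<Longrightarrow> g \<in> SO3"
  by (simp add: SO3_def orthogonal_matrix)

lemma rotz_SO3: "rotz t \<in> SO3"
  by (rule SO3_I) (simp_all add: mat3_eq_iff mat3_mult_nth det_3 power2_eq_square[symmetric])

lemma rotx_SO3: "rotx t \<in> SO3"
  by (rule SO3_I) (simp_all add: mat3_eq_iff mat3_mult_nth det_3 power2_eq_square[symmetric])

lemma SO3_orthonormal: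
  assumes "g \<in> SO3"
  shows "g$1$3 * g$1$3 + g$2$3 * g$2$3 + g$3$3 * g$3$3 = 1"
    and "g$3$1 * g$3$1 + g$3$2 * g$3$2 + g$3$3 * g$3$3 = 1"
    and "g$1$1 * g$1$1 + g$2$1 * g$2$1 + g$3$1 * g$3$1 = 1"
    and "g$1$1 * g$1$2 + g$2$1 * g$2$2 + g$3$1 * g$3$2 = 0"
  using orthogonal_matrix_columns[OF SO3_orthogonal[OF assms], of 3 3]
    orthogonal_matrix_rows[OF SO3_orthogonal[OF assms], of 3 3]
    orthogonal_matrix_columns[OF SO3_orthogonal[OF assms], of 1 1]
    orthogonal_matrix_columns[OF SO3_orthogonal[OF assms], of 1 2]
  by (simp_all add: sum_3)

lemma rotation_matrix2_entries:
  fixes a b c d :: real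
  assumes "a\<^sup>2 + c\<^sup>2 = 1" "a * b + c * d = 0" "a * d - b * c = 1"
  shows "d = a" "b = - c"
proof -
  have "a - d = d * (a\<^sup>2 + c\<^sup>2 - 1) - a * (a * d - b * c - 1) - c * (a * b + c * d)"
    by (simp add: algebra_simps power2_eq_square)
  then show "d = a" using assms by simp
  have "b + c = - (b * (a\<^sup>2 + c\<^sup>2 - 1) + c * (a * d - b * c - 1) - a * (a * b + c * d))"
    by (simp add: algebra_simps power2_eq_square)
  then show "b = - c" using assms by simp
qed

lemma SO3_fixing_e3_is_rotz:
  assumes g: "g \<in> SO3" and "g$1$3 = 0" "g$2$3 = 0" "g$3$1 = 0" "g$3$2 = 0" "g$3$3 = 1"
  shows "\<exists>t. g = rotz t"
proof -
  have det: "g$1$1 * g$2$2 - g$1$2 * g$2$1 = 1"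
    using g assms by (simp add: SO3_def det_3)
  have unit: "(g$1$1)\<^sup>2 + (g$2$1)\<^sup>2 = 1" and orth: "g$1$1 * g$1$2 + g$2$1 * g$2$2 = 0"
    using SO3_orthonormal[OF g] assms by (simp_all add: power2_eq_square)
  obtain t where "g$1$1 = cos t" "g$2$1 = sin t"
    using sincos_total_2pi[OF unit] by metis
  then have "g = rotz t"
    using assms rotation_matrix2_entries[OF unit orth det] by (simp add: mat3_eq_iff)
  then show ?thesis ..
qed

lemma O2_explicit: "O2 = range rotz \<union> range (\<lambda>t. rotz t ** rotx pi)"
proof
  have "matrix_group (range rotz \<union> range (\<lambda>t. rotz t ** rotx pi))"
  proof -
    have inv_rotz: "matrix_inv (rotz t) = rotz (- t)" for t
      by (simp add: SO3_matrix_inv rotz_SO3 transpose_rotz)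
    have inv_flip: "matrix_inv (rotz t ** rotx pi) = rotz t ** rotx pi" for t
      by (simp add: SO3_matrix_inv SO3_mult rotz_SO3 rotx_SO3 matrix_transpose_mul
          mat3_eq_iff mat3_mult_nth)
    have "rotz a ** (rotz b ** rotx pi) = rotz (a + b) ** rotx pi"
      and "(rotz a ** rotx pi) ** rotz b = rotz (a - b) ** rotx pi"
      and "(rotz a ** rotx pi) ** (rotz b ** rotx pi) = rotz (a - b)" for a b
      by (simp_all add: mat3_eq_iff mat3_mult_nth cos_add sin_add cos_diff sin_diff)
    then show ?thesis
      unfolding matrix_group_def
      by (auto simp: rotz_0[symmetric] rotz_add inv_rotz inv_flip)
  qed
  then show "O2 \<subseteq> range rotz \<union> range (\<lambda>t. rotz t ** rotx pi)"
    unfolding O2_def by (rule gen_group_least) (auto intro: image_eqI[of _ _ 0] simp: rotz_0)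
  show "range rotz \<union> range (\<lambda>t. rotz t ** rotx pi) \<subseteq> O2"
    unfolding O2_def by (auto intro: gen_group.intros)
qed

lemma O2_cases:
  assumes "g \<in> O2"
  obtains t where "g = rotz t" | t where "g = rotz t ** rotx pi"
  using assms by (auto simp: O2_explicit)

lemma O2_iff: "g \<in> O2 \<longleftrightarrow> g \<in> SO3 \<and> (g$3$3 = 1 \<or> g$3$3 = -1)"
proof
  assume "g \<in> O2"
  then show "g \<in> SO3 \<and> (g$3$3 = 1 \<or> g$3$3 = -1)"
    by (cases rule: O2_cases) (auto simp: rotz_SO3 rotx_SO3 SO3_mult mat3_mult_nth)
next
  assume g: "g \<in> SO3 \<and> (g$3$3 = 1 \<or> g$3$3 = -1)"
  then have "g$1$3 * g$1$3 + g$2$3 * g$2$3 = 0" "g$3$1 * g$3$1 + g$3$2 * g$3$2 = 0"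
    using SO3_orthonormal(1,2)[of g] by auto
  then have zeros: "g$1$3 = 0" "g$2$3 = 0" "g$3$1 = 0" "g$3$2 = 0"
    by (simp_all add: sum_squares_eq_zero_iff)
  from g consider "g$3$3 = 1" | "g$3$3 = -1" by blast
  then show "g \<in> O2"
  proof cases
    case 1
    then show ?thesis using SO3_fixing_e3_is_rotz[of g] g zeros by (auto simp: O2_explicit)
  next
    case 2
    have "g ** rotx pi \<in> SO3" using g rotx_SO3 SO3_mult by blast
    then obtain t where t: "g ** rotx pi = rotz t"
      using SO3_fixing_e3_is_rotz[of "g ** rotx pi"] zeros 2 by (auto simp: mat3_mult_nth)
    have "g = g ** rotx pi ** rotx pi" by (simp add: matrix_mul_assoc[symmetric] rotx_pi_rotx_pi)
    then show ?thesis using t by (auto simp: O2_explicit)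
  qed
qed

lemma O2_subset_SO3: "O2 \<subseteq> SO3"
  by (auto simp: O2_iff)

lemma rotz_O2: "rotz t \<in> O2" and rotx_pi_O2: "rotx pi \<in> O2"
  by (simp_all add: O2_def gen_group.gen)

lemma conjugate_rotz_O2: "k \<in> O2 \<Longrightarrow> conjugate (rotz t) k \<in> O2"
  by (simp add: O2_iff conjugate_SO3 rotz_SO3 SO3_mult SO3_transpose mat3_mult_nth)

lemma symgroup4_rotz_image_subset_O2:
  "symgroup4 H \<subseteq> O2 \<Longrightarrow> symgroup4 (act4 (rotz p) H) \<subseteq> O2"
  using conjugate_rotz_O2 by (auto simp: symgroup4_act4 rotz_SO3)

lemma rotx_half_pi_not_O2: "rotx (pi / 2) \<notin> O2"
  by (simp add: O2_iff)

lemma Dn_subset_O2: "Dn n \<subseteq> O2"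
  unfolding Dn_def O2_def by (rule gen_group_mono) auto

lemma rotz_Dn: "rotz (2 * pi / real n) \<in> Dn n" and rotx_pi_Dn: "rotx pi \<in> Dn n"
  by (simp_all add: Dn_def gen_group.gen)

lemma matrix_group_rotz_of_int:
  assumes G: "matrix_group G" and t: "rotz t \<in> G"
  shows "rotz (of_int k * t) \<in> G"
proof -
  have nat: "rotz (real m * t) \<in> G" for m
  proof (induction m)
    case 0
    then show ?case using G by (simp add: rotz_0 matrix_group_def)
  next
    case (Suc m)
    have "rotz (real (Suc m) * t) = rotz t ** rotz (real m * t)"
      by (simp add: rotz_add algebra_simps)
    then show ?case using Suc G t by (simp add: matrix_group_def)
  qed
  have "matrix_inv (rotz (real m * t)) = rotz (- (real m * t))" for m
    by (simp add: SO3_matrix_inv rotz_SO3 transpose_rotz)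
  then have neg: "rotz (- (real m * t)) \<in> G" for m
    using nat G by (metis matrix_group_def)
  show ?thesis
  proof (cases "k \<ge> 0")
    case True
    then have "k = int (nat k)" by simp
    then show ?thesis using nat[of "nat k"] by (metis of_int_of_nat_eq)
  next
    case False
    then have "k = - int (nat (- k))" by simp
    then show ?thesis
      using neg[of "nat (- k)"] by (metis minus_mult_left of_int_minus of_int_of_nat_eq)
  qed
qed

section \<open>Transversely isotropic second-order tensors\<close>

definition z_axisymmetric :: "tensor2 \<Rightarrow> bool" where
  "z_axisymmetric M \<longleftrightarrow>
     M 1 2 = 0 \<and> M 2 1 = 0 \<and> M 1 3 = 0 \<and> M 3 1 = 0 \<and> M 2 3 = 0 \<and> M 3 2 = 0 \<and> M 2 2 = M 1 1"

lemma act2_rotz: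
  assumes "M \<in> Sym2"
  shows "act2 (rotz t) M 1 3 = cos t * M 1 3 - sin t * M 2 3"
    and "act2 (rotz t) M 2 3 = sin t * M 1 3 + cos t * M 2 3"
    and "act2 (rotz t) M 1 1 - act2 (rotz t) M 2 2
           = cos (2*t) * (M 1 1 - M 2 2) - sin (2*t) * (2 * M 1 2)"
    and "2 * act2 (rotz t) M 1 2 = sin (2*t) * (M 1 1 - M 2 2) + cos (2*t) * (2 * M 1 2)"
proof -
  have sym: "M 2 1 = M 1 2" "M 3 1 = M 1 3" "M 3 2 = M 2 3"
    using assms by (auto simp: Sym2_def)
  note defs = act2_def sum_3 sym rotz_nth cos_double sin_double
  show "act2 (rotz t) M 1 3 = cos t * M 1 3 - sin t * M 2 3"
    and "act2 (rotz t) M 2 3 = sin t * M 1 3 + cos t * M 2 3"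
    and "act2 (rotz t) M 1 1 - act2 (rotz t) M 2 2
           = cos (2*t) * (M 1 1 - M 2 2) - sin (2*t) * (2 * M 1 2)"
    and "2 * act2 (rotz t) M 1 2 = sin (2*t) * (M 1 1 - M 2 2) + cos (2*t) * (2 * M 1 2)"
    by (simp only: defs; algebra)+
qed

lemma rotation_fixed_vector_eq_0:
  fixes x y :: real
  assumes "cos t * x - sin t * y = x" "sin t * x + cos t * y = y" "cos t \<noteq> 1"
  shows "x = 0" "y = 0"
proof -
  have sc: "sin t ^ 2 + cos t ^ 2 = 1" by simp
  have "(2 - 2 * cos t) * x = (cos t - 1) * (cos t * x - sin t * y - x)
      + sin t * (sin t * x + cos t * y - y) + x * (1 - (sin t ^ 2 + cos t ^ 2))"
    and "(2 - 2 * cos t) * y = - sin t * (cos t * x - sin t * y - x)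
      + (cos t - 1) * (sin t * x + cos t * y - y) + y * (1 - (sin t ^ 2 + cos t ^ 2))"
    by algebra+
  then show "x = 0" "y = 0" using assms sc by simp_all
qed

lemma cos_eq_1_imp_dvd:
  assumes "cos (of_int p * (2 * pi / of_int q)) = 1" "q > 0"
  shows "q dvd p"
proof -
  obtain n :: int where "of_int p * (2 * pi / of_int q) = of_int n * 2 * pi"
    using assms(1) cos_one_2pi_int by blast
  then have "of_int p = (of_int (n * q) :: real)"
    using assms(2) by (simp add: field_simps)
  then show ?thesis by (simp only: of_int_eq_iff) simp
qed

lemma z_axisymmetric_if_rotz_fixed:
  assumes M: "M \<in> Sym2" and fixed: "act2 (rotz (2 * pi / real n)) M = M" and n: "n \<ge> 3"
  shows "z_axisymmetric M"
proof -
  have "\<not> int n dvd 1" "\<not> int n dvd 2" using n by (auto dest: zdvd_imp_le)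
  then have cos: "cos (2 * pi / real n) \<noteq> 1" "cos (2 * (2 * pi / real n)) \<noteq> 1"
    using n cos_eq_1_imp_dvd[of 1 "int n"] cos_eq_1_imp_dvd[of 2 "int n"] by auto
  note rot = act2_rotz[OF M, of "2 * pi / real n", unfolded fixed]
  have "M 1 3 = 0" "M 2 3 = 0"
    using rotation_fixed_vector_eq_0[OF rot(1,2)[symmetric] cos(1)] by simp_all
  moreover have "M 1 1 - M 2 2 = 0" "2 * M 1 2 = 0"
    using rotation_fixed_vector_eq_0[OF rot(3,4)[symmetric] cos(2)] by simp_all
  ultimately show ?thesis
    using M by (simp add: z_axisymmetric_def Sym2_def)
qed

lemma act2_O2_z_axisymmetric:
  assumes M: "z_axisymmetric M" and g: "g \<in> O2"
  shows "act2 g M = M"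
proof -
  have M_nth: "M 1 2 = 0" "M 2 1 = 0" "M 1 3 = 0" "M 3 1 = 0" "M 2 3 = 0" "M 3 2 = 0"
    "M 2 2 = M 1 1"
    using M by (simp_all add: z_axisymmetric_def)
  have "act2 (rotz t) M = M" for t
  proof -
    have sc: "sin t ^ 2 + cos t ^ 2 = 1" by simp
    show ?thesis
      unfolding fun_eq_iff forall_3
      by (intro conjI, simp_all only: act2_def sum_3 M_nth rotz_nth, (use sc in algebra)+)
  qed
  moreover have "act2 (rotx pi) M = M"
    by (simp add: fun_eq_iff forall_3 act2_def sum_3 M_nth)
  ultimately have "O2 \<subseteq> symgroup2 M"
    unfolding O2_def symgroup2_eq_stabilizer
    by (intro gen_group_least tensor2.matrix_group_stabilizer)
       (auto simp: tensor2.stabilizer_def rotz_SO3 rotx_SO3)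
  then show ?thesis using g by (auto simp: symgroup2_def)
qed

lemma O2_if_act2_fixes_z_axisymmetric:
  assumes K: "z_axisymmetric K" "K 1 1 \<noteq> K 3 3" and g: "g \<in> SO3" and fixed: "act2 g K = K"
  shows "g \<in> O2"
proof -
  have "g$3$1 * g$3$1 * K 1 1 + g$3$2 * g$3$2 * K 1 1 + g$3$3 * g$3$3 * K 3 3 = K 3 3"
    using fun_cong[OF fun_cong[OF fixed, of 3], of 3] K(1)
    by (simp add: act2_def sum_3 z_axisymmetric_def)
  moreover have "(K 3 3 - K 1 1) * (g$3$3 * g$3$3 - 1)
      = (g$3$1 * g$3$1 * K 1 1 + g$3$2 * g$3$2 * K 1 1 + g$3$3 * g$3$3 * K 3 3 - K 3 3)
        - K 1 1 * (g$3$1 * g$3$1 + g$3$2 * g$3$2 + g$3$3 * g$3$3 - 1)"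
    by (simp add: algebra_simps)
  ultimately have "(K 3 3 - K 1 1) * (g$3$3 * g$3$3 - 1) = 0"
    using SO3_orthonormal(2)[OF g] by simp
  then have "g$3$3 * g$3$3 = 1" using K(2) by simp
  then show ?thesis
    using g by (auto simp: O2_iff square_eq_1_iff)
qed

lemma act2_isotropic:
  assumes M: "z_axisymmetric M" "M 1 1 = M 3 3" and g: "orthogonal_matrix g"
  shows "act2 g M = M"
proof (rule ext)+
  fix i j
  have M_nth: "M 1 2 = 0" "M 2 1 = 0" "M 1 3 = 0" "M 3 1 = 0" "M 2 3 = 0" "M 3 2 = 0"
    "M 2 2 = M 1 1" "M 3 3 = M 1 1"
    using M by (simp_all add: z_axisymmetric_def)
  have "act2 g M i j = M 1 1 * (\<Sum>p\<in>UNIV. g$i$p * g$j$p)"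
    by (simp add: act2_def sum_3 M_nth algebra_simps)
  also have "\<dots> = M i j"
    using exhaust_3[of i] exhaust_3[of j]
    by (auto simp: orthogonal_matrix_rows[OF g] M_nth)
  finally show "act2 g M i j = M i j" .
qed

section \<open>A normal form for harmonic fourth-order tensors\<close>

lemma H4_swap:
  assumes "H \<in> H4"
  shows "H a b c d = H b a c d" "H a b c d = H a c b d" "H a b c d = H a b d c"
  using assms unfolding H4_def totally_symmetric4_def by blast+

lemma H4_pair_swap: "H \<in> H4 \<Longrightarrow> H a b c d = H c d a b"
  by (metis H4_swap)

lemma H4_trace: "H \<in> H4 \<Longrightarrow> H 1 1 k l + H 2 2 k l + H 3 3 k l = 0"
  unfolding H4_def by (simp add: sum_3)

lemma H4_trace_nth:
  assumes "H \<in> H4"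
  shows "H 1 1 3 3 = - (H 1 1 1 1 + H 1 1 2 2)"
    and "H 2 2 3 3 = - (H 1 1 2 2 + H 2 2 2 2)"
    and "H 3 3 3 3 = H 1 1 1 1 + 2 * H 1 1 2 2 + H 2 2 2 2"
    and "H 1 2 3 3 = - (H 1 1 1 2 + H 1 2 2 2)"
    and "H 1 3 3 3 = - (H 1 1 1 3 + H 1 2 2 3)"
    and "H 2 3 3 3 = - (H 1 1 2 3 + H 2 2 2 3)"
proof -
  have "H 1 1 1 1 + H 2 2 1 1 + H 3 3 1 1 = 0" "H 1 1 2 2 + H 2 2 2 2 + H 3 3 2 2 = 0"
     "H 1 1 3 3 + H 2 2 3 3 + H 3 3 3 3 = 0" "H 1 1 1 2 + H 2 2 1 2 + H 3 3 1 2 = 0"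
     "H 1 1 1 3 + H 2 2 1 3 + H 3 3 1 3 = 0" "H 1 1 2 3 + H 2 2 2 3 + H 3 3 2 3 = 0"
    using H4_trace[OF assms] by auto
  then have "H 1 1 1 1 + H 1 1 2 2 + H 1 1 3 3 = 0" "H 1 1 2 2 + H 2 2 2 2 + H 2 2 3 3 = 0"
     "H 1 1 3 3 + H 2 2 3 3 + H 3 3 3 3 = 0" "H 1 1 1 2 + H 1 2 2 2 + H 1 2 3 3 = 0"
     "H 1 1 1 3 + H 1 2 2 3 + H 1 3 3 3 = 0" "H 1 1 2 3 + H 2 2 2 3 + H 2 3 3 3 = 0"
    by (simp_all add: H4_swap[OF assms])
  then show "H 1 1 3 3 = - (H 1 1 1 1 + H 1 1 2 2)"
    and "H 2 2 3 3 = - (H 1 1 2 2 + H 2 2 2 2)"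
    and "H 3 3 3 3 = H 1 1 1 1 + 2 * H 1 1 2 2 + H 2 2 2 2"
    and "H 1 2 3 3 = - (H 1 1 1 2 + H 1 2 2 2)"
    and "H 1 3 3 3 = - (H 1 1 1 3 + H 1 2 2 3)"
    and "H 2 3 3 3 = - (H 1 1 2 3 + H 2 2 2 3)"
    by linarith+
qed

lemmas H4_simps = H4_swap H4_trace_nth

lemma H4_eqI:
  assumes "A \<in> H4" "B \<in> H4"
    and "A 1 1 1 1 = B 1 1 1 1" "A 1 1 1 2 = B 1 1 1 2" "A 1 1 2 2 = B 1 1 2 2"
      "A 1 2 2 2 = B 1 2 2 2" "A 2 2 2 2 = B 2 2 2 2" "A 1 1 1 3 = B 1 1 1 3"
      "A 1 1 2 3 = B 1 1 2 3" "A 1 2 2 3 = B 1 2 2 3" "A 2 2 2 3 = B 2 2 2 3"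
  shows "A = B"
  using assms by (simp add: fun_eq_iff forall_3 H4_simps[OF assms(1)] H4_simps[OF assms(2)])

definition z_adapted :: "tensor4 \<Rightarrow> bool" where
  "z_adapted H \<longleftrightarrow> H \<in> H4 \<and> z_axisymmetric (\<lambda>i j. H i j 3 3)"

lemma z_adapted_iff:
  "z_adapted H \<longleftrightarrow> H \<in> H4 \<and> H 2 2 2 2 = H 1 1 1 1 \<and> H 1 2 2 2 = - H 1 1 1 2
      \<and> H 1 2 2 3 = - H 1 1 1 3 \<and> H 2 2 2 3 = - H 1 1 2 3"
proof (cases "H \<in> H4")
  case True
  then show ?thesis
    unfolding z_adapted_def z_axisymmetric_def
    by (simp add: H4_simps[OF True]) linarith
qed (simp add: z_adapted_def)

lemma z_adapted_nth:
  assumes "z_adapted H"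
  shows "H 2 2 2 2 = H 1 1 1 1" "H 1 2 2 2 = - H 1 1 1 2"
    "H 1 2 2 3 = - H 1 1 1 3" "H 2 2 2 3 = - H 1 1 2 3"
  using assms by (simp_all add: z_adapted_iff)

lemma z_adapted_H4: "z_adapted H \<Longrightarrow> H \<in> H4"
  by (simp add: z_adapted_def)

lemma z_adapted_eqI:
  assumes "z_adapted A" "z_adapted B"
    and "A 1 1 1 1 = B 1 1 1 1" "A 1 1 2 2 = B 1 1 2 2" "A 1 1 1 2 = B 1 1 1 2"
      "A 1 1 1 3 = B 1 1 1 3" "A 1 1 2 3 = B 1 1 2 3"
  shows "A = B"
  using assms by (intro H4_eqI) (auto simp: z_adapted_iff)

lemma dcontr42_z_axisymmetric:
  assumes H: "H \<in> H4" and K: "z_axisymmetric K"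
  shows "dcontr42 H K = (\<lambda>i j. (K 3 3 - K 1 1) * H i j 3 3)"
proof (intro ext)
  fix i j
  have trace: "H i j 1 1 + H i j 2 2 = - H i j 3 3"
    using H4_trace[OF H, of i j] by (simp add: H4_pair_swap[OF H, of _ _ i j])
  have "dcontr42 H K i j = K 1 1 * (H i j 1 1 + H i j 2 2) + K 3 3 * H i j 3 3"
    using K by (simp add: dcontr42_def sum_3 z_axisymmetric_def algebra_simps)
  then show "dcontr42 H K i j = (K 3 3 - K 1 1) * H i j 3 3"
    unfolding trace by (simp add: algebra_simps)
qed

lemma z_adapted_if_contraction_z_axisymmetric:
  assumes H: "H \<in> H4" and K: "z_axisymmetric K" "K 1 1 \<noteq> K 3 3"
    and HK: "z_axisymmetric (dcontr42 H K)"
  shows "z_adapted H"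
  using H HK K(2) by (simp add: dcontr42_z_axisymmetric[OF H K(1)] z_adapted_def z_axisymmetric_def)

lemma z_adapted_if_rotz_fixed:
  assumes H: "H \<in> H4" and fixed: "act4 (rotz (2 * pi / real n)) H = H" and n: "n \<ge> 3"
  shows "z_adapted H"
proof -
  define E :: tensor2 where "E = (\<lambda>i j. if i = 3 \<and> j = 3 then 1 else 0)"
  have E: "z_axisymmetric E" "E 1 1 \<noteq> E 3 3" "act2 (rotz (2 * pi / real n)) E = E"
    by (simp_all add: E_def z_axisymmetric_def fun_eq_iff forall_3 act2_def sum_3)
  have "act2 (rotz (2 * pi / real n)) (dcontr42 H E) = dcontr42 H E"
    using dcontr42_act[OF SO3_orthogonal[OF rotz_SO3[of "2 * pi / real n"]], of H E] fixed E(3)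
    by simp
  moreover have "dcontr42 H E \<in> Sym2"
    using H by (simp add: Sym2_def dcontr42_def E_def sum_3 H4_swap(1)[OF H, of _ _ 3 3])
  ultimately have "z_axisymmetric (dcontr42 H E)"
    using n by (intro z_axisymmetric_if_rotz_fixed)
  then show ?thesis
    using z_adapted_if_contraction_z_axisymmetric[OF H E(1,2)] by blast
qed

lemma cos_quadruple: "cos (4 * t) = 8 * cos t ^ 4 - 8 * cos t ^ 2 + 1"
  for t :: real
proof -
  have "cos (4 * t) = 2 * cos (2 * t) ^ 2 - 1"
    using cos_double_cos[of "2 * t"] by simp
  then show ?thesis unfolding cos_double_cos by algebra
qed

lemma sin_quadruple: "sin (4 * t) = 4 * sin t * cos t * (2 * cos t ^ 2 - 1)"
  for t :: real
proof -
  have "sin (4 * t) = 2 * sin (2 * t) * cos (2 * t)"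
    using sin_double[of "2 * t"] by simp
  then show ?thesis unfolding sin_double cos_double_cos by algebra
qed

lemma sin_treble: "sin (3 * t) = 3 * sin t - 4 * sin t ^ 3"
  for t :: real
proof -
  have "sin (3 * t) = sin (2 * t) * cos t + cos (2 * t) * sin t"
    using sin_add[of "2 * t" t] by simp
  moreover have "sin t ^ 2 + cos t ^ 2 = 1" by simp
  ultimately show ?thesis unfolding sin_double cos_double_sin by algebra
qed

text \<open>A rotation by \<open>t\<close> about the z-axis rotates the pair
  \<open>(H\<^sub>1\<^sub>1\<^sub>1\<^sub>1 - 3 H\<^sub>1\<^sub>1\<^sub>2\<^sub>2, 4 H\<^sub>1\<^sub>1\<^sub>1\<^sub>2)\<close> by \<open>4t\<close>
  and the pair \<open>(H\<^sub>1\<^sub>1\<^sub>2\<^sub>3, H\<^sub>1\<^sub>1\<^sub>1\<^sub>3)\<close> by \<open>3t\<close>.\<close>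

lemma act4_rotz_z_adapted:
  assumes H: "z_adapted H"
  shows "z_adapted (act4 (rotz t) H)"
    and "act4 (rotz t) H 1 1 1 1 = (3 * (H 1 1 1 1 + H 1 1 2 2)
        + (H 1 1 1 1 - 3 * H 1 1 2 2) * cos (4*t) - 4 * H 1 1 1 2 * sin (4*t)) / 4"
    and "act4 (rotz t) H 1 1 2 2 = ((H 1 1 1 1 + H 1 1 2 2)
        - (H 1 1 1 1 - 3 * H 1 1 2 2) * cos (4*t) + 4 * H 1 1 1 2 * sin (4*t)) / 4"
    and "act4 (rotz t) H 1 1 1 2
        = H 1 1 1 2 * cos (4*t) + (H 1 1 1 1 - 3 * H 1 1 2 2) * sin (4*t) / 4"
    and "act4 (rotz t) H 1 1 1 3 = H 1 1 1 3 * cos (3*t) - H 1 1 2 3 * sin (3*t)"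
    and "act4 (rotz t) H 1 1 2 3 = H 1 1 2 3 * cos (3*t) + H 1 1 1 3 * sin (3*t)"
proof -
  have sc: "sin t ^ 2 + cos t ^ 2 = 1" by simp
  note S = act4_def sum_3 H4_simps[OF z_adapted_H4[OF H]] z_adapted_nth[OF H]
  have "act4 (rotz t) H 2 2 2 2 = act4 (rotz t) H 1 1 1 1"
    and "act4 (rotz t) H 1 2 2 2 = - act4 (rotz t) H 1 1 1 2"
    and "act4 (rotz t) H 1 2 2 3 = - act4 (rotz t) H 1 1 1 3"
    and "act4 (rotz t) H 2 2 2 3 = - act4 (rotz t) H 1 1 2 3"
    by (simp add: S; use sc in algebra)+
  moreover have "act4 (rotz t) H \<in> H4"
    using H by (simp add: act4_H4 SO3_orthogonal rotz_SO3 z_adapted_H4)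
  ultimately show "z_adapted (act4 (rotz t) H)"
    by (simp add: z_adapted_iff)
  show "act4 (rotz t) H 1 1 1 1 = (3 * (H 1 1 1 1 + H 1 1 2 2)
        + (H 1 1 1 1 - 3 * H 1 1 2 2) * cos (4*t) - 4 * H 1 1 1 2 * sin (4*t)) / 4"
    and "act4 (rotz t) H 1 1 2 2 = ((H 1 1 1 1 + H 1 1 2 2)
        - (H 1 1 1 1 - 3 * H 1 1 2 2) * cos (4*t) + 4 * H 1 1 1 2 * sin (4*t)) / 4"
    and "act4 (rotz t) H 1 1 1 2
        = H 1 1 1 2 * cos (4*t) + (H 1 1 1 1 - 3 * H 1 1 2 2) * sin (4*t) / 4"
    by (simp add: S cos_quadruple sin_quadruple; use sc in algebra)+
  show "act4 (rotz t) H 1 1 1 3 = H 1 1 1 3 * cos (3*t) - H 1 1 2 3 * sin (3*t)"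
    and "act4 (rotz t) H 1 1 2 3 = H 1 1 2 3 * cos (3*t) + H 1 1 1 3 * sin (3*t)"
    by (simp add: S cos_treble_cos sin_treble; use sc in algebra)+
qed

lemma act4_rotx_pi_fixes_z_adapted:
  assumes H: "z_adapted H" and "H 1 1 1 2 = 0" "H 1 1 1 3 = 0"
  shows "act4 (rotx pi) H = H"
proof (rule z_adapted_eqI[OF _ H])
  note S = act4_def sum_3 H4_simps[OF z_adapted_H4[OF H]] z_adapted_nth[OF H]
  have "act4 (rotx pi) H 2 2 2 2 = act4 (rotx pi) H 1 1 1 1"
    and "act4 (rotx pi) H 1 2 2 2 = - act4 (rotx pi) H 1 1 1 2"
    and "act4 (rotx pi) H 1 2 2 3 = - act4 (rotx pi) H 1 1 1 3"
    and "act4 (rotx pi) H 2 2 2 3 = - act4 (rotx pi) H 1 1 2 3"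
    by (simp_all add: S)
  moreover have "act4 (rotx pi) H \<in> H4"
    using H by (simp add: act4_H4 SO3_orthogonal rotx_SO3 z_adapted_H4)
  ultimately show "z_adapted (act4 (rotx pi) H)"
    by (simp add: z_adapted_iff)
  show "act4 (rotx pi) H 1 1 1 1 = H 1 1 1 1" "act4 (rotx pi) H 1 1 2 2 = H 1 1 2 2"
    "act4 (rotx pi) H 1 1 1 2 = H 1 1 1 2" "act4 (rotx pi) H 1 1 1 3 = H 1 1 1 3"
    "act4 (rotx pi) H 1 1 2 3 = H 1 1 2 3"
    using assms by (simp_all add: S)
qed

lemma act4_rotx_pi_nth:
  "act4 (rotx pi) H 1 1 1 2 = - H 1 1 1 2" "act4 (rotx pi) H 1 1 1 3 = - H 1 1 1 3"
  by (simp_all add: act4_def sum_3)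

lemma d2_z_adapted:
  assumes H: "z_adapted H"
  shows "d2 H 1 3 = (H 1 1 1 1 - 3 * H 1 1 2 2) * H 1 1 1 3 + 4 * H 1 1 1 2 * H 1 1 2 3"
    and "d2 H 2 3 = - (H 1 1 1 1 - 3 * H 1 1 2 2) * H 1 1 2 3 + 4 * H 1 1 1 2 * H 1 1 1 3"
    and "d2 H 1 1 = 6 * H 1 1 1 1 * H 1 1 2 2 + 4 * (H 1 1 1 1)\<^sup>2 + 4 * (H 1 1 1 2)\<^sup>2
      + 6 * (H 1 1 2 2)\<^sup>2 + 6 * (H 1 1 1 3)\<^sup>2 + 6 * (H 1 1 2 3)\<^sup>2"
    and "d2 H 3 3 = 20 * H 1 1 1 1 * H 1 1 2 2 + 10 * (H 1 1 1 1)\<^sup>2 + 10 * (H 1 1 2 2)\<^sup>2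
      + 4 * (H 1 1 1 3)\<^sup>2 + 4 * (H 1 1 2 3)\<^sup>2"
  by (simp add: d2_def tr13_def dcontr44_def sum_3 H4_simps[OF z_adapted_H4[OF H]]
      z_adapted_nth[OF H]; algebra)+

section \<open>Symmetry classes in an adapted frame\<close>

abbreviation in_class_D4_D3_O2 :: "mat3 set \<Rightarrow> bool" where
  "in_class_D4_D3_O2 G \<equiv> in_class G (Dn 4) \<or> in_class G (Dn 3) \<or> in_class G O2"

lemma polar_coordinates:
  fixes x y :: real
  assumes "x \<noteq> 0 \<or> y \<noteq> 0"
  obtains r a where "r > 0" "x = r * cos a" "y = r * sin a"
proof -
  define r where "r = sqrt (x\<^sup>2 + y\<^sup>2)"
  have "x\<^sup>2 + y\<^sup>2 > 0" using assms by (auto simp: add_pos_nonneg add_nonneg_pos)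
  then have r: "r > 0" "r\<^sup>2 = x\<^sup>2 + y\<^sup>2" by (simp_all add: r_def)
  then have "(x / r)\<^sup>2 + (y / r)\<^sup>2 = 1"
    using assms by (simp add: power_divide add_divide_distrib[symmetric])
  then obtain a where "x / r = cos a" "y / r = sin a" using sincos_total_2pi by metis
  then show ?thesis using that r(1) by (simp add: field_simps)
qed

lemma symgroup4_eq_DnI:
  assumes sub: "symgroup4 H \<subseteq> O2" and n: "n > 0"
    and flip: "act4 (rotx pi) H = H" and rot: "act4 (rotz (2 * pi / real n)) H = H"
    and rot_only: "\<And>t. act4 (rotz t) H = H \<Longrightarrow> cos (real n * t) = 1"
  shows "symgroup4 H = Dn n"
proof
  show "Dn n \<subseteq> symgroup4 H"
    unfolding Dn_def symgroup4_eq_stabilizer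
    by (intro gen_group_least tensor4.matrix_group_stabilizer)
       (use flip rot in \<open>auto simp: tensor4.stabilizer_def rotz_SO3 rotx_SO3\<close>)
  have fixing_rotz_Dn: "rotz t \<in> Dn n" if fixed: "act4 (rotz t) H = H" for t
  proof -
    obtain k :: int where "real n * t = of_int k * 2 * pi"
      using rot_only[OF fixed] cos_one_2pi_int by blast
    then have "t = of_int k * (2 * pi / real n)" using n by (simp add: field_simps)
    then show ?thesis
      using matrix_group_rotz_of_int[OF _ rotz_Dn] by (simp add: Dn_def matrix_group_gen_group)
  qed
  show "symgroup4 H \<subseteq> Dn n"
  proof
    fix g assume g: "g \<in> symgroup4 H"
    then have fixed: "act4 g H = H" by (simp add: symgroup4_def)
    from g sub have "g \<in> O2" by blast
    then show "g \<in> Dn n"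
    proof (cases rule: O2_cases)
      case (1 t)
      then show ?thesis using fixing_rotz_Dn fixed by simp
    next
      case (2 t)
      then have "act4 (rotz t) H = H" using fixed flip by (metis act4_mult)
      then show ?thesis
        using 2 fixing_rotz_Dn rotx_pi_Dn
          matrix_group_gen_group[of "{rotz (2 * pi / real n), rotx pi}"]
        by (simp add: Dn_def matrix_group_def)
    qed
  qed
qed

lemma symgroup4_eq_O2_if_z_adapted:
  assumes H: "z_adapted H" and sub: "symgroup4 H \<subseteq> O2"
    and zero: "H 1 1 1 1 = 3 * H 1 1 2 2" "H 1 1 1 2 = 0" "H 1 1 1 3 = 0" "H 1 1 2 3 = 0"
  shows "symgroup4 H = O2"
proof -
  have "act4 (rotz t) H = H" for t
    using zero
    by (intro z_adapted_eqI[OF act4_rotz_z_adapted(1)[OF H] H])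
       (simp_all add: act4_rotz_z_adapted[OF H])
  moreover have "act4 (rotx pi) H = H"
    using zero by (intro act4_rotx_pi_fixes_z_adapted[OF H])
  ultimately have "O2 \<subseteq> symgroup4 H"
    unfolding O2_def symgroup4_eq_stabilizer
    by (intro gen_group_least tensor4.matrix_group_stabilizer)
       (auto simp: tensor4.stabilizer_def rotz_SO3 rotx_SO3)
  then show ?thesis using sub by blast
qed

lemma symgroup4_eq_D4_if_z_adapted:
  assumes H: "z_adapted H" and sub: "symgroup4 H \<subseteq> O2"
    and zero: "H 1 1 1 2 = 0" "H 1 1 1 3 = 0" "H 1 1 2 3 = 0"
    and nonzero: "H 1 1 1 1 - 3 * H 1 1 2 2 \<noteq> 0"
  shows "symgroup4 H = Dn 4"
proof (rule symgroup4_eq_DnI[OF sub])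
  show "act4 (rotx pi) H = H"
    using zero by (intro act4_rotx_pi_fixes_z_adapted[OF H])
  show "act4 (rotz (2 * pi / real 4)) H = H"
    using zero
    by (intro z_adapted_eqI[OF act4_rotz_z_adapted(1)[OF H] H])
       (simp_all add: act4_rotz_z_adapted[OF H] field_simps)
  show "cos (real 4 * t) = 1" if "act4 (rotz t) H = H" for t
  proof -
    have "(H 1 1 1 1 - 3 * H 1 1 2 2) * cos (4 * t) = H 1 1 1 1 - 3 * H 1 1 2 2"
      using act4_rotz_z_adapted(2)[OF H, of t] that zero by (simp add: field_simps)
    then show ?thesis using nonzero by simp
  qed
qed simp

lemma symgroup4_eq_D3_if_z_adapted:
  assumes H: "z_adapted H" and sub: "symgroup4 H \<subseteq> O2"
    and zero: "H 1 1 1 1 = 3 * H 1 1 2 2" "H 1 1 1 2 = 0" "H 1 1 1 3 = 0"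
    and nonzero: "H 1 1 2 3 \<noteq> 0"
  shows "symgroup4 H = Dn 3"
proof (rule symgroup4_eq_DnI[OF sub])
  show "act4 (rotx pi) H = H"
    using zero by (intro act4_rotx_pi_fixes_z_adapted[OF H])
  show "act4 (rotz (2 * pi / real 3)) H = H"
    using zero
    by (intro z_adapted_eqI[OF act4_rotz_z_adapted(1)[OF H] H])
       (simp_all add: act4_rotz_z_adapted[OF H] field_simps)
  show "cos (real 3 * t) = 1" if "act4 (rotz t) H = H" for t
  proof -
    have "H 1 1 2 3 * cos (3 * t) = H 1 1 2 3"
      using act4_rotz_z_adapted(6)[OF H, of t] that zero by simp
    then show ?thesis using nonzero by simp
  qed
qed simp

text \<open>If just one of the two rotating pairs vanishes, a rotation about the z-axis turns the other
  one into \<open>(r, 0)\<close> with \<open>r > 0\<close>, which puts \<open>H\<close> into the position of the two previous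
  lemmas.\<close>

lemma in_class_D4_if_z_adapted:
  assumes H: "z_adapted H" and sub: "symgroup4 H \<subseteq> O2"
    and nonzero: "H 1 1 1 1 - 3 * H 1 1 2 2 \<noteq> 0 \<or> H 1 1 1 2 \<noteq> 0"
    and zero: "H 1 1 1 3 = 0" "H 1 1 2 3 = 0"
  shows "in_class (symgroup4 H) (Dn 4)"
proof -
  obtain r a where r: "r > 0" "H 1 1 1 1 - 3 * H 1 1 2 2 = r * cos a" "4 * H 1 1 1 2 = r * sin a"
    using nonzero polar_coordinates[of "H 1 1 1 1 - 3 * H 1 1 2 2" "4 * H 1 1 1 2"] by auto
  define H' where "H' = act4 (rotz (- a / 4)) H"
  have trig: "cos (4 * (- a / 4)) = cos a" "sin (4 * (- a / 4)) = - sin a" by simp_all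
  have "H' 1 1 1 1 - 3 * H' 1 1 2 2
      = (H 1 1 1 1 - 3 * H 1 1 2 2) * cos a + 4 * H 1 1 1 2 * sin a"
    unfolding H'_def act4_rotz_z_adapted(2,3)[OF H] trig by (simp add: field_simps)
  also have "\<dots> = r"
    using r by (simp add: algebra_simps) (simp flip: distrib_left)
  finally have "H' 1 1 1 1 - 3 * H' 1 1 2 2 \<noteq> 0" using r(1) by simp
  moreover have "H' 1 1 1 2 = 0" "H' 1 1 1 3 = 0" "H' 1 1 2 3 = 0"
    unfolding H'_def act4_rotz_z_adapted(4,5,6)[OF H] trig zero
    using r by (simp_all add: algebra_simps)
  ultimately have "symgroup4 H' = Dn 4"
    using sub H by (intro symgroup4_eq_D4_if_z_adapted)
      (simp_all add: H'_def act4_rotz_z_adapted symgroup4_rotz_image_subset_O2)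
  then show ?thesis
    using in_class_symgroup4_act4[OF rotz_SO3] in_class_refl by (metis H'_def)
qed

lemma in_class_D3_if_z_adapted:
  assumes H: "z_adapted H" and sub: "symgroup4 H \<subseteq> O2"
    and zero: "H 1 1 1 1 = 3 * H 1 1 2 2" "H 1 1 1 2 = 0"
    and nonzero: "H 1 1 1 3 \<noteq> 0 \<or> H 1 1 2 3 \<noteq> 0"
  shows "in_class (symgroup4 H) (Dn 3)"
proof -
  obtain r a where r: "r > 0" "H 1 1 2 3 = r * cos a" "H 1 1 1 3 = r * sin a"
    using nonzero polar_coordinates[of "H 1 1 2 3" "H 1 1 1 3"] by auto
  define H' where "H' = act4 (rotz (a / 3)) H"
  have trig: "cos (3 * (a / 3)) = cos a" "sin (3 * (a / 3)) = sin a" by simp_all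
  have "H' 1 1 2 3 = r"
    unfolding H'_def act4_rotz_z_adapted(6)[OF H] trig r(2,3)
    by (simp add: algebra_simps) (simp flip: distrib_left)
  moreover have "H' 1 1 1 3 = 0"
    unfolding H'_def act4_rotz_z_adapted(5)[OF H] trig using r by (simp add: algebra_simps)
  moreover have "H' 1 1 1 1 = 3 * H' 1 1 2 2" "H' 1 1 1 2 = 0"
    unfolding H'_def act4_rotz_z_adapted(2,3,4)[OF H] zero by (simp_all add: field_simps)
  ultimately have "symgroup4 H' = Dn 3"
    using sub H r(1) by (intro symgroup4_eq_D3_if_z_adapted)
      (simp_all add: H'_def act4_rotz_z_adapted symgroup4_rotz_image_subset_O2)
  then show ?thesis
    using in_class_symgroup4_act4[OF rotz_SO3] in_class_refl by (metis H'_def)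
qed

text \<open>With \<open>m = H\<^sub>1\<^sub>1\<^sub>1\<^sub>1 - 3 H\<^sub>1\<^sub>1\<^sub>2\<^sub>2\<close>, \<open>b = H\<^sub>1\<^sub>1\<^sub>1\<^sub>2\<close>,
  \<open>f = H\<^sub>1\<^sub>1\<^sub>1\<^sub>3\<close>, \<open>g = H\<^sub>1\<^sub>1\<^sub>2\<^sub>3\<close> one has
  \<open>d\<^sub>1\<^sub>3 + i d\<^sub>2\<^sub>3 = (m + 4bi)(f - gi)\<close>, so one of the two factors vanishes.\<close>

lemma z_adapted_symmetry_classes:
  assumes H: "z_adapted H" and sub: "symgroup4 H \<subseteq> O2" and d2: "d2 H 1 3 = 0" "d2 H 2 3 = 0"
  shows "in_class_D4_D3_O2 (symgroup4 H)"
proof -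
  define m b f g where "m = H 1 1 1 1 - 3 * H 1 1 2 2" and "b = H 1 1 1 2"
    and "f = H 1 1 1 3" and "g = H 1 1 2 3"
  have e1: "m * f + 4 * b * g = 0" and e2: "- m * g + 4 * b * f = 0"
    using d2 d2_z_adapted[OF H] by (simp_all add: m_def b_def f_def g_def)
  have "(m\<^sup>2 + 16 * b\<^sup>2) * f = m * (m * f + 4 * b * g) + 4 * b * (- m * g + 4 * b * f)"
    and "(m\<^sup>2 + 16 * b\<^sup>2) * g = 4 * b * (m * f + 4 * b * g) - m * (- m * g + 4 * b * f)"
    by (simp_all add: algebra_simps power2_eq_square)
  then have fg: "(m\<^sup>2 + 16 * b\<^sup>2) * f = 0" "(m\<^sup>2 + 16 * b\<^sup>2) * g = 0"
    using e1 e2 by simp_all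
  consider "m \<noteq> 0 \<or> b \<noteq> 0" | "m = 0" "b = 0" "f \<noteq> 0 \<or> g \<noteq> 0" | "m = 0" "b = 0" "f = 0" "g = 0"
    by blast
  then show ?thesis
  proof cases
    case 1
    then have "m\<^sup>2 + 16 * b\<^sup>2 \<noteq> 0" by (auto simp: add_nonneg_eq_0_iff)
    then have "f = 0" "g = 0" using fg by simp_all
    then show ?thesis
      using in_class_D4_if_z_adapted[OF H sub] 1 by (simp add: m_def b_def f_def g_def)
  next
    case 2
    then show ?thesis
      using in_class_D3_if_z_adapted[OF H sub] by (simp add: m_def b_def f_def g_def)
  next
    case 3
    then show ?thesis
      using symgroup4_eq_O2_if_z_adapted[OF H sub] in_class_refl
      by (simp add: m_def b_def f_def g_def)
  qed
qed

section \<open>Cubic tensors\<close>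

lemma act4_scaleR: "act4 (k *\<^sub>R G) T i j p q = k ^ 4 * act4 G T i j p q"
  by (simp add: act4_def sum_distrib_left power4_eq_xxxx mult_ac)

lemma sqrt_2_3_mult_self:
  "sqrt 2 * (sqrt 2 * x) = 2 * x" "sqrt 3 * (sqrt 3 * x) = 3 * x"
  by (simp_all add: mult.assoc[symmetric])

text \<open>Half-turns (the matrices are symmetric) carrying the z-axis to another 4-fold axis
  (\<open>a\<close>, \<open>b\<close>) resp. 3-fold axis (\<open>c\<close>, \<open>d\<close>) of a cube having the z-axis as a
  4-fold resp. 3-fold axis.\<close>

definition cube_half_turn_a :: mat3 where
  "cube_half_turn_a = vector [
     vector [0, 0, 1],
     vector [0, -1, 0],
     vector [1, 0, 0]]"

definition cube_half_turn_b :: mat3 where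
  "cube_half_turn_b = (1/2) *\<^sub>R vector [
     vector [-1, 1, sqrt 2],
     vector [1, -1, sqrt 2],
     vector [sqrt 2, sqrt 2, 0]]"

definition cube_half_turn_c :: mat3 where
  "cube_half_turn_c = (1/6) *\<^sub>R vector [
     vector [-3, sqrt 3, 2 * sqrt 2 * sqrt 3],
     vector [sqrt 3, -5, 2 * sqrt 2],
     vector [2 * sqrt 2 * sqrt 3, 2 * sqrt 2, 2]]"

definition cube_half_turn_d :: mat3 where
  "cube_half_turn_d = (1/3) *\<^sub>R vector [
     vector [0, sqrt 3, sqrt 2 * sqrt 3],
     vector [sqrt 3, -2, sqrt 2],
     vector [sqrt 2 * sqrt 3, sqrt 2, -1]]"

lemma cube_half_turn_a_SO3: "cube_half_turn_a \<in> SO3"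
  by (rule SO3_I)
     (simp_all add: cube_half_turn_a_def mat3_eq_iff mat3_mult_nth det_3 algebra_simps
        sqrt_2_3_mult_self)

lemma cube_half_turn_a_not_O2: "cube_half_turn_a \<notin> O2"
  by (simp add: O2_iff cube_half_turn_a_def)

lemma act4_cube_half_turn_a:
  assumes H: "z_adapted H" and "H 1 1 1 2 = 0" "H 1 1 1 3 = 0"
    and "H 1 1 2 3 = 0" "H 1 1 1 1 = -2 * H 1 1 2 2"
  shows "act4 cube_half_turn_a H = H"
  using assms
  by (intro H4_eqI act4_H4 SO3_orthogonal cube_half_turn_a_SO3 z_adapted_H4[OF H];
      unfold cube_half_turn_a_def;
      simp only: act4_def sum_3 vector_3 H4_simps[OF z_adapted_H4[OF H]] z_adapted_nth[OF H] assms;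
      simp add: algebra_simps sqrt_2_3_mult_self power_divide)

lemma cube_half_turn_b_SO3: "cube_half_turn_b \<in> SO3"
  by (rule SO3_I)
     (simp_all add: cube_half_turn_b_def mat3_eq_iff mat3_mult_nth det_3 algebra_simps
        sqrt_2_3_mult_self)

lemma cube_half_turn_b_not_O2: "cube_half_turn_b \<notin> O2"
  by (simp add: O2_iff cube_half_turn_b_def)

lemma act4_cube_half_turn_b:
  assumes H: "z_adapted H" and "H 1 1 1 2 = 0" "H 1 1 1 3 = 0"
    and "H 1 1 2 3 = 0" "H 1 1 2 2 = -3 * H 1 1 1 1"
  shows "act4 cube_half_turn_b H = H"
  using assms
  by (intro H4_eqI act4_H4 SO3_orthogonal cube_half_turn_b_SO3 z_adapted_H4[OF H];
      unfold cube_half_turn_b_def act4_scaleR;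
      simp only: act4_def sum_3 vector_3 H4_simps[OF z_adapted_H4[OF H]] z_adapted_nth[OF H] assms;
      simp add: algebra_simps sqrt_2_3_mult_self power_divide)

lemma cube_half_turn_c_SO3: "cube_half_turn_c \<in> SO3"
  by (rule SO3_I)
     (simp_all add: cube_half_turn_c_def mat3_eq_iff mat3_mult_nth det_3 algebra_simps
        sqrt_2_3_mult_self)

lemma cube_half_turn_c_not_O2: "cube_half_turn_c \<notin> O2"
  by (simp add: O2_iff cube_half_turn_c_def)

lemma act4_cube_half_turn_c:
  assumes H: "z_adapted H" and "H 1 1 1 2 = 0" "H 1 1 1 3 = 0"
    and "H 1 1 1 1 = 3 * H 1 1 2 2" "H 1 1 2 3 = 5 * sqrt 2 * H 1 1 2 2"
  shows "act4 cube_half_turn_c H = H"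
  using assms
  by (intro H4_eqI act4_H4 SO3_orthogonal cube_half_turn_c_SO3 z_adapted_H4[OF H];
      unfold cube_half_turn_c_def act4_scaleR;
      simp only: act4_def sum_3 vector_3 H4_simps[OF z_adapted_H4[OF H]] z_adapted_nth[OF H] assms;
      simp add: algebra_simps sqrt_2_3_mult_self power_divide)

lemma cube_half_turn_d_SO3: "cube_half_turn_d \<in> SO3"
  by (rule SO3_I)
     (simp_all add: cube_half_turn_d_def mat3_eq_iff mat3_mult_nth det_3 algebra_simps
        sqrt_2_3_mult_self)

lemma cube_half_turn_d_not_O2: "cube_half_turn_d \<notin> O2"
  by (simp add: O2_iff cube_half_turn_d_def)

lemma act4_cube_half_turn_d:
  assumes H: "z_adapted H" and "H 1 1 1 2 = 0" "H 1 1 1 3 = 0"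
    and "H 1 1 1 1 = 3 * H 1 1 2 2" "H 1 1 2 3 = -5 * sqrt 2 * H 1 1 2 2"
  shows "act4 cube_half_turn_d H = H"
  using assms
  by (intro H4_eqI act4_H4 SO3_orthogonal cube_half_turn_d_SO3 z_adapted_H4[OF H];
      unfold cube_half_turn_d_def act4_scaleR;
      simp only: act4_def sum_3 vector_3 H4_simps[OF z_adapted_H4[OF H]] z_adapted_nth[OF H] assms;
      simp add: algebra_simps sqrt_2_3_mult_self power_divide)

lemma symgroup4_not_subset_O2I: "h \<in> SO3 \<Longrightarrow> h \<notin> O2 \<Longrightarrow> act4 h H = H \<Longrightarrow> \<not> symgroup4 H \<subseteq> O2"
  by (auto simp: symgroup4_def)

lemma d2_isotropic_z_adapted:
  assumes H: "z_adapted H" and zero: "H 1 1 1 2 = 0" "H 1 1 1 3 = 0" and iso: "d2 H 1 1 = d2 H 3 3"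
  shows "2 * (H 1 1 2 3)\<^sup>2 = 14 * H 1 1 1 1 * H 1 1 2 2 + 6 * (H 1 1 1 1)\<^sup>2 + 4 * (H 1 1 2 2)\<^sup>2"
  using iso d2_z_adapted(3,4)[OF H] zero by simp

text \<open>If \<open>d\<^sub>2\<close> is isotropic, a tensor with a dihedral symmetry \<open>D\<^sub>4\<close> or
  \<open>D\<^sub>3\<close> in standard position is cubic.\<close>

lemma symgroup4_not_subset_O2_if_D4_d2_isotropic:
  assumes H: "z_adapted H" and zero: "H 1 1 1 2 = 0" "H 1 1 1 3 = 0"
    and rot: "act4 (rotz (2 * pi / 4)) H = H" and iso: "d2 H 1 1 = d2 H 3 3"
  shows "\<not> symgroup4 H \<subseteq> O2"
proof -
  have "H 1 1 2 3 * cos (3 * (2 * pi / 4)) = H 1 1 2 3"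
    using act4_rotz_z_adapted(6)[OF H, of "2 * pi / 4"] rot zero by simp
  moreover have "cos (3 * (2 * pi / 4)) \<noteq> 1" using cos_eq_1_imp_dvd[of 3 4] by auto
  ultimately have g: "H 1 1 2 3 = 0" by simp
  then have "(3 * H 1 1 1 1 + H 1 1 2 2) * (H 1 1 1 1 + 2 * H 1 1 2 2) = 0"
    using d2_isotropic_z_adapted[OF H zero iso] by (simp add: algebra_simps power2_eq_square)
  then consider "H 1 1 1 1 = -2 * H 1 1 2 2" | "H 1 1 2 2 = -3 * H 1 1 1 1"
    by (auto simp: mult_eq_0_iff)
  then show ?thesis
  proof cases
    case 1
    then show ?thesis
      using act4_cube_half_turn_a[OF H zero g] cube_half_turn_a_SO3 cube_half_turn_a_not_O2
      by (intro symgroup4_not_subset_O2I)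
  next
    case 2
    then show ?thesis
      using act4_cube_half_turn_b[OF H zero g] cube_half_turn_b_SO3 cube_half_turn_b_not_O2
      by (intro symgroup4_not_subset_O2I)
  qed
qed

lemma symgroup4_not_subset_O2_if_D3_d2_isotropic:
  assumes H: "z_adapted H" and zero: "H 1 1 1 2 = 0" "H 1 1 1 3 = 0"
    and rot: "act4 (rotz (2 * pi / 3)) H = H" and iso: "d2 H 1 1 = d2 H 3 3"
  shows "\<not> symgroup4 H \<subseteq> O2"
proof -
  have "(H 1 1 1 1 - 3 * H 1 1 2 2) * cos (4 * (2 * pi / 3)) = H 1 1 1 1 - 3 * H 1 1 2 2"
    using act4_rotz_z_adapted(2)[OF H, of "2 * pi / 3"] rot zero by (simp add: field_simps)
  moreover have "cos (4 * (2 * pi / 3)) \<noteq> 1" using cos_eq_1_imp_dvd[of 4 3] by auto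
  ultimately have a: "H 1 1 1 1 = 3 * H 1 1 2 2" by simp
  have "(H 1 1 2 3 - 5 * sqrt 2 * H 1 1 2 2) * (H 1 1 2 3 + 5 * sqrt 2 * H 1 1 2 2)
      = (H 1 1 2 3)\<^sup>2 - 25 * (sqrt 2 * sqrt 2) * (H 1 1 2 2)\<^sup>2"
    by (simp add: algebra_simps power2_eq_square)
  then have "(H 1 1 2 3 - 5 * sqrt 2 * H 1 1 2 2) * (H 1 1 2 3 + 5 * sqrt 2 * H 1 1 2 2) = 0"
    using d2_isotropic_z_adapted[OF H zero iso] a by (simp add: power2_eq_square)
  then consider "H 1 1 2 3 = 5 * sqrt 2 * H 1 1 2 2" | "H 1 1 2 3 = -5 * sqrt 2 * H 1 1 2 2"
    by (auto simp: mult_eq_0_iff)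
  then show ?thesis
  proof cases
    case 1
    then show ?thesis
      using act4_cube_half_turn_c[OF H zero a] cube_half_turn_c_SO3 cube_half_turn_c_not_O2
      by (intro symgroup4_not_subset_O2I)
  next
    case 2
    then show ?thesis
      using act4_cube_half_turn_d[OF H zero a] cube_half_turn_d_SO3 cube_half_turn_d_not_O2
      by (intro symgroup4_not_subset_O2I)
  qed
qed

lemma symgroup4_not_subset_O2_if_d2_isotropic:
  assumes H: "H \<in> H4" and flip: "act4 (rotx pi) H = H"
    and rot: "act4 (rotz (2 * pi / real n)) H = H" and n: "n = 3 \<or> n = 4"
    and iso: "d2 H 1 1 = d2 H 3 3"
  shows "\<not> symgroup4 H \<subseteq> O2"
proof -
  have Hz: "z_adapted H"
    using n by (intro z_adapted_if_rotz_fixed[OF H rot]) auto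
  have zero: "H 1 1 1 2 = 0" "H 1 1 1 3 = 0"
    using act4_rotx_pi_nth[of H] flip by simp_all
  from n show ?thesis
    using symgroup4_not_subset_O2_if_D4_d2_isotropic[OF Hz zero _ iso]
      symgroup4_not_subset_O2_if_D3_d2_isotropic[OF Hz zero _ iso] rot
    by auto
qed

section \<open>Covariants\<close>

lemma polyfun4_sum:
  assumes "finite A" "\<And>k. k \<in> A \<Longrightarrow> f k \<in> polyfun4"
  shows "(\<lambda>T. \<Sum>k\<in>A. f k T) \<in> polyfun4"
  using assms by (induction A rule: finite_induct) (auto intro: polyfun4.intros)

lemma H4_d2_summand_swap: "H \<in> H4 \<Longrightarrow> H k i m n * H m n k j = H i k m n * H j k m n"
  by (metis H4_swap)

lemma d2_eq_sum:
  assumes "H \<in> H4"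
  shows "d2 H i j = (\<Sum>k\<in>UNIV. \<Sum>m\<in>UNIV. \<Sum>n\<in>UNIV. H i k m n * H j k m n)"
  unfolding d2_def tr13_def dcontr44_def
  by (intro sum.cong refl) (rule H4_d2_summand_swap[OF assms])

lemma d2_Sym2: "H \<in> H4 \<Longrightarrow> d2 H \<in> Sym2"
  by (auto simp: Sym2_def d2_eq_sum mult.commute)

lemma dcontr42_Sym2: "H \<in> H4 \<Longrightarrow> dcontr42 H a \<in> Sym2"
  unfolding Sym2_def dcontr42_def by (auto intro!: sum.cong simp: H4_swap(1)[of H])

lemma c3_Sym2: "H \<in> H4 \<Longrightarrow> c3 H \<in> Sym2"
  by (simp add: c3_def dcontr42_Sym2)

lemma equivariant_poly_map_d2: "equivariant_poly_map d2"
  unfolding equivariant_poly_map_def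
proof (intro conjI ballI allI)
  fix i j
  have "(\<lambda>T. d2 T i j) \<in> polyfun4"
    unfolding d2_def tr13_def dcontr44_def
    by (intro polyfun4_sum polyfun4.mult polyfun4.coord finite)
  then show "\<exists>p\<in>polyfun4. \<forall>T\<in>H4. d2 T i j = p T" by (rule bexI[rotated]) simp
qed (simp_all add: d2_Sym2 d2_act4 SO3_orthogonal)

lemma equivariant_poly_map_dcontr42:
  assumes F: "equivariant_poly_map F"
  shows "equivariant_poly_map (\<lambda>T. dcontr42 T (F T))"
  unfolding equivariant_poly_map_def
proof (intro conjI ballI allI)
  fix i j
  obtain P where P: "\<And>k l. P k l \<in> polyfun4" "\<And>k l T. T \<in> H4 \<Longrightarrow> F T k l = P k l T"
    using F unfolding equivariant_poly_map_def by metis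
  have "(\<lambda>T. \<Sum>k\<in>UNIV. \<Sum>l\<in>UNIV. T i j k l * P k l T) \<in> polyfun4"
    by (intro polyfun4_sum polyfun4.mult polyfun4.coord P(1) finite)
  then show "\<exists>p\<in>polyfun4. \<forall>T\<in>H4. dcontr42 T (F T) i j = p T"
    by (rule bexI[rotated]) (simp add: dcontr42_def P(2))
next
  fix g T assume g: "g \<in> SO3" and T: "T \<in> H4"
  have "F (act4 g T) = act2 g (F T)"
    using F g T by (simp add: equivariant_poly_map_def)
  then show "dcontr42 (act4 g T) (F (act4 g T)) = act2 g (dcontr42 T (F T))"
    by (simp add: dcontr42_act[OF SO3_orthogonal[OF g]])
qed (rule dcontr42_Sym2)

lemma equivariant_poly_map_c3: "equivariant_poly_map c3"
proof -
  have "c3 = (\<lambda>T. dcontr42 T (d2 T))" by (simp add: fun_eq_iff c3_def)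
  then show ?thesis using equivariant_poly_map_dcontr42[OF equivariant_poly_map_d2] by simp
qed

lemma d2_Cov2: "d2 H \<in> Cov2 H" and c3_Cov2: "c3 H \<in> Cov2 H"
  using equivariant_poly_map_d2 equivariant_poly_map_c3 unfolding Cov2_def by blast+

lemma dcontr42_Cov2:
  assumes "K \<in> Cov2 H"
  shows "dcontr42 H K \<in> Cov2 H"
proof -
  obtain F where "equivariant_poly_map F" "K = F H"
    using assms by (auto simp: Cov2_def)
  then show ?thesis
    unfolding Cov2_def
    by (intro CollectI exI[of _ "\<lambda>T. dcontr42 T (F T)"]) (simp add: equivariant_poly_map_dcontr42)
qed

lemma Cov2_Sym2: "H \<in> H4 \<Longrightarrow> K \<in> Cov2 H \<Longrightarrow> K \<in> Sym2"
  unfolding Cov2_def equivariant_poly_map_def by auto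

lemma Cov2_act4:
  assumes "g \<in> SO3" "H \<in> H4"
  shows "Cov2 (act4 g H) = act2 g ` Cov2 H"
proof -
  have "F (act4 g H) = act2 g (F H)" if "equivariant_poly_map F" for F
    using that assms unfolding equivariant_poly_map_def by blast
  then show ?thesis unfolding Cov2_def by (auto simp: image_iff) metis
qed

lemma symgroup4_subset_symgroup2_family_Cov2:
  assumes "H \<in> H4"
  shows "symgroup4 H \<subseteq> symgroup2_family (Cov2 H)"
proof
  fix g assume g: "g \<in> symgroup4 H"
  have "act2 g (F H) = F H" if "equivariant_poly_map F" for F
    using that g assms unfolding equivariant_poly_map_def symgroup4_def by force
  then show "g \<in> symgroup2_family (Cov2 H)"
    using g by (auto simp: symgroup2_family_def symgroup4_def Cov2_def)
qed

section \<open>Symmetry classes of the covariants\<close>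

lemma z_axisymmetric_if_symgroup2_family_O2:
  assumes A: "symgroup2_family A = O2" "A \<subseteq> Sym2" and K: "K \<in> A"
  shows "z_axisymmetric K"
proof (rule z_axisymmetric_if_rotz_fixed)
  show "act2 (rotz (2 * pi / real 4)) K = K"
    using rotz_O2 A(1) K by (auto simp: symgroup2_family_def)
qed (use A K in auto)

lemma anisotropic_if_symgroup2_family_O2:
  assumes A: "symgroup2_family A = O2" and axi: "\<And>K. K \<in> A \<Longrightarrow> z_axisymmetric K"
  shows "\<exists>K\<in>A. K 1 1 \<noteq> K 3 3"
proof (rule ccontr)
  assume "\<not> (\<exists>K\<in>A. K 1 1 \<noteq> K 3 3)"
  then have "act2 (rotx (pi / 2)) K = K" if "K \<in> A" for K
    using that axi act2_isotropic SO3_orthogonal[OF rotx_SO3] by blast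
  then have "rotx (pi / 2) \<in> symgroup2_family A"
    by (simp add: symgroup2_family_def rotx_SO3)
  then show False using A rotx_half_pi_not_O2 by simp
qed

lemma symmetry_classes_if_symgroup2_family_O2:
  assumes H: "H \<in> H4"
    and A: "symgroup2_family A = O2" "A \<subseteq> Cov2 H" "d2 H \<in> A"
    and K: "K \<in> A" "K 1 1 \<noteq> K 3 3" "dcontr42 H K \<in> A"
  shows "in_class_D4_D3_O2 (symgroup4 H)"
proof (rule z_adapted_symmetry_classes)
  have axi: "z_axisymmetric M" if "M \<in> A" for M
    using A that Cov2_Sym2[OF H] by (intro z_axisymmetric_if_symgroup2_family_O2) auto
  show "z_adapted H"
    using z_adapted_if_contraction_z_axisymmetric[OF H axi[OF K(1)] K(2) axi[OF K(3)]] .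
  have "symgroup4 H \<subseteq> symgroup2_family (Cov2 H)"
    by (rule symgroup4_subset_symgroup2_family_Cov2[OF H])
  also have "\<dots> \<subseteq> symgroup2_family A"
    using A(2) by (auto simp: symgroup2_family_def)
  finally show "symgroup4 H \<subseteq> O2" using A(1) by simp
  show "d2 H 1 3 = 0" "d2 H 2 3 = 0"
    using axi[OF A(3)] by (simp_all add: z_axisymmetric_def)
qed

lemma symmetry_classes_if_Cov2_O2:
  assumes H: "H \<in> H4" and Cov2: "symgroup2_family (Cov2 H) = O2"
  shows "in_class_D4_D3_O2 (symgroup4 H)"
proof -
  have "z_axisymmetric K" if "K \<in> Cov2 H" for K
    using Cov2 that Cov2_Sym2[OF H] by (intro z_axisymmetric_if_symgroup2_family_O2) auto
  then obtain K where "K \<in> Cov2 H" "K 1 1 \<noteq> K 3 3"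
    using anisotropic_if_symgroup2_family_O2[OF Cov2] by blast
  then show ?thesis
    using symmetry_classes_if_symgroup2_family_O2[OF H Cov2] d2_Cov2 dcontr42_Cov2 by blast
qed

lemma symmetry_classes_if_d2_c3_O2:
  assumes H: "H \<in> H4" and d2c3: "symgroup2_family {d2 H, c3 H} = O2"
  shows "in_class_D4_D3_O2 (symgroup4 H)"
proof -
  have axi: "z_axisymmetric (d2 H)" "z_axisymmetric (c3 H)"
    using d2c3 d2_Sym2[OF H] c3_Sym2[OF H]
    by (auto intro: z_axisymmetric_if_symgroup2_family_O2)
  have "d2 H 1 1 \<noteq> d2 H 3 3"
  proof
    assume iso: "d2 H 1 1 = d2 H 3 3"
    then have "c3 H = (\<lambda>i j. 0)"
      by (simp add: c3_def dcontr42_z_axisymmetric[OF H axi(1)])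
    then show False
      using anisotropic_if_symgroup2_family_O2[OF d2c3] axi iso by auto
  qed
  moreover have "dcontr42 H (d2 H) \<in> {d2 H, c3 H}"
    by (simp add: c3_def)
  ultimately show ?thesis
    by (intro symmetry_classes_if_symgroup2_family_O2[OF H d2c3]) (auto simp: d2_Cov2 c3_Cov2)
qed

lemma symgroup2_family_O2_if_symgroup4_dihedral:
  assumes H: "H \<in> H4" and G: "symgroup4 H = Dn 4 \<or> symgroup4 H = Dn 3 \<or> symgroup4 H = O2"
    and A: "d2 H \<in> A" "A \<subseteq> Cov2 H"
  shows "symgroup2_family A = O2"
proof -
  obtain n where n: "n = 3 \<or> n = 4"
    and rot: "rotz (2 * pi / real n) \<in> symgroup4 H" and flip: "rotx pi \<in> symgroup4 H"
    using G rotz_Dn rotx_pi_Dn rotz_O2 rotx_pi_O2 by metis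
  have sub: "symgroup4 H \<subseteq> O2"
    using G Dn_subset_O2 by auto
  have axi: "z_axisymmetric K" if "K \<in> Cov2 H" for K
  proof (rule z_axisymmetric_if_rotz_fixed)
    show "act2 (rotz (2 * pi / real n)) K = K"
      using rot symgroup4_subset_symgroup2_family_Cov2[OF H] that
      by (auto simp: symgroup2_family_def)
  qed (use n Cov2_Sym2[OF H that] in auto)
  have "d2 H 1 1 \<noteq> d2 H 3 3"
    using symgroup4_not_subset_O2_if_d2_isotropic[OF H _ _ n] rot flip sub
    by (auto simp: symgroup4_def)
  show ?thesis
  proof
    show "symgroup2_family A \<subseteq> O2"
      using O2_if_act2_fixes_z_axisymmetric[OF axi[OF d2_Cov2] \<open>d2 H 1 1 \<noteq> d2 H 3 3\<close>] A(1)
      by (auto simp: symgroup2_family_def)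
    show "O2 \<subseteq> symgroup2_family A"
      using act2_O2_z_axisymmetric axi A(2) O2_subset_SO3 by (auto simp: symgroup2_family_def)
  qed
qed

lemma symgroup2_family_Cov2_act4:
  "g \<in> SO3 \<Longrightarrow> H \<in> H4
    \<Longrightarrow> symgroup2_family (Cov2 (act4 g H)) = conjugate g ` symgroup2_family (Cov2 H)"
  by (simp add: Cov2_act4 symgroup2_family_image)

lemma symgroup2_family_d2_c3_act4:
  "g \<in> SO3 \<Longrightarrow> symgroup2_family {d2 (act4 g H), c3 (act4 g H)}
    = conjugate g ` symgroup2_family {d2 H, c3 H}"
  by (simp add: d2_act4 c3_act4 SO3_orthogonal flip: symgroup2_family_image)

lemma symmetry_classes_if_in_class_Cov2_O2:
  assumes H: "H \<in> H4" and "in_class (symgroup2_family (Cov2 H)) O2"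
  shows "in_class_D4_D3_O2 (symgroup4 H)"
proof -
  obtain g where g: "g \<in> SO3" "symgroup2_family (Cov2 (act4 g H)) = O2"
    using assms in_class_iff_act4_eq[OF symgroup2_family_Cov2_act4[OF _ H]] by blast
  then show ?thesis
    using symmetry_classes_if_Cov2_O2[OF act4_H4[OF SO3_orthogonal H]] in_class_symgroup4_act4
    by metis
qed

lemma symmetry_classes_if_in_class_d2_c3_O2:
  assumes H: "H \<in> H4" and "in_class (symgroup2_family {d2 H, c3 H}) O2"
  shows "in_class_D4_D3_O2 (symgroup4 H)"
proof -
  obtain g where g: "g \<in> SO3" "symgroup2_family {d2 (act4 g H), c3 (act4 g H)} = O2"
    using assms in_class_iff_act4_eq[OF symgroup2_family_d2_c3_act4] by blast
  then show ?thesis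
    using symmetry_classes_if_d2_c3_O2[OF act4_H4[OF SO3_orthogonal H]] in_class_symgroup4_act4
    by metis
qed

lemma in_class_covariants_O2_if_symmetry_classes:
  assumes H: "H \<in> H4" and "in_class_D4_D3_O2 (symgroup4 H)"
  shows "in_class (symgroup2_family (Cov2 H)) O2 \<and> in_class (symgroup2_family {d2 H, c3 H}) O2"
proof -
  obtain g where g: "g \<in> SO3" and dihedral:
    "symgroup4 (act4 g H) = Dn 4 \<or> symgroup4 (act4 g H) = Dn 3 \<or> symgroup4 (act4 g H) = O2"
    using assms in_class_iff_act4_eq[OF symgroup4_act4] by metis
  have gH: "act4 g H \<in> H4"
    using act4_H4[OF SO3_orthogonal[OF g] H] .
  have "symgroup2_family (Cov2 (act4 g H)) = O2"
    by (rule symgroup2_family_O2_if_symgroup4_dihedral[OF gH dihedral d2_Cov2 order_refl])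
  moreover have "symgroup2_family {d2 (act4 g H), c3 (act4 g H)} = O2"
    by (rule symgroup2_family_O2_if_symgroup4_dihedral[OF gH dihedral])
       (simp_all add: d2_Cov2 c3_Cov2)
  ultimately show ?thesis
    using g in_class_iff_act4_eq[OF symgroup2_family_Cov2_act4[OF _ H]]
      in_class_iff_act4_eq[OF symgroup2_family_d2_c3_act4]
    by blast
qed

theorem theorem9p5:
  fixes H :: tensor4
  assumes "H \<in> H4"
  shows "(in_class (symgroup2_family (Cov2 H)) O2
          \<longleftrightarrow> (in_class (symgroup4 H) (Dn 4) \<or> in_class (symgroup4 H) (Dn 3)
               \<or> in_class (symgroup4 H) O2))
       \<and> (in_class (symgroup4 H) (Dn 4) \<or> in_class (symgroup4 H) (Dn 3)
               \<or> in_class (symgroup4 H) O2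
          \<longleftrightarrow> in_class (symgroup2_family {d2 H, c3 H}) O2)"
  using symmetry_classes_if_in_class_Cov2_O2[OF assms]
    symmetry_classes_if_in_class_d2_c3_O2[OF assms]
    in_class_covariants_O2_if_symmetry_classes[OF assms]
  by blast

end
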